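(* For each real $x \geq 1$, let $m(x)$ be the greatest positive integer $m$ such that $\varphi(m) \leq x$. Then \[ m(x) \sim e^{\gamma}\, x \log\log x \quad \text{as } x \to +\infty, \] i.e., $m(x)/(x\log\log x) \to e^{\gamma}$.
   Context: $\varphi$ denotes Euler's totient function and $\gamma$ is the Euler--Mascheroni constant. $\log$ is the natural logarithm. *)

theory Defs
  imports "HOL-Analysis.Analysis" "HOL-Number_Theory.Number_Theory"
begin

definition max_totient_preimage :: "real \<Rightarrow> nat" where
  "max_totient_preimage x = (GREATEST m. m > 0 \<and> real (totient m) \<le> x)"

end

theory Submission
  imports Defs "HOL-Real_Asymp.Real_Asymp"
begin

text \<open>
  Since \<open>m / \<phi>(m)\<close> is the product of \<open>p / (p - 1)\<close> over the primes dividing \<open>m\<close>, everything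
  rests on Mertens' third theorem: the product of \<open>p / (p - 1)\<close> over \<open>p \<le> y\<close> is
  asymptotic to \<open>e\<^sup>\<gamma> ln y\<close>. It follows from Chebyshev's bound \<open>\<psi>(n) \<le> 4 n\<close> through Mertens'
  first and second theorems, except for the value of the constant. That is identified by
  evaluating the sum of \<open>- ln (1 - p powr (-1 - \<sigma>))\<close> over primes in two ways as \<open>\<sigma> \<rightarrow> 0+\<close>: as the
  logarithm of a partial Euler product of \<open>\<zeta>(1 + \<sigma>)\<close>, which is \<open>ln (1 / \<sigma>) + o(1)\<close>, and by
  partial summation against \<open>n powr (-\<sigma>)\<close> after writing the Mertens sum as the step function
  \<open>harm (floor_ln n)\<close> plus a convergent remainder.

  For the upper bound on \<open>m = m(x)\<close>, the prime factors of \<open>m\<close> up to \<open>ln m\<close> contribute at most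
  the Mertens product up to \<open>ln m\<close>, and the at most \<open>ln m / ln (ln m)\<close> larger ones only a
  factor \<open>1 + o(1)\<close>; since \<open>\<phi>(m) \<ge> \<surd>m\<close> eventually, \<open>m \<le> x\<^sup>2\<close>, so \<open>ln (ln m) \<le> ln (ln x) + ln 2\<close>.
  For the lower bound, the product \<open>N\<close> of the primes up to \<open>ln x / (2 ln (ln x))\<close> is at most
  \<open>\<surd>x\<close>, and its multiple \<open>k N\<close> with \<open>k = \<lfloor>x / \<phi>(N)\<rfloor>\<close> has \<open>\<phi>(k N) \<le> k \<phi>(N) \<le> x\<close> and
  \<open>k N \<ge> x N / \<phi>(N) - N\<close>.
\<close>

section \<open>Partial sums of the zeta function near 1\<close>

lemma powr_neg_diff_ge:
  fixes a b \<sigma> :: real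
  assumes "0 < a" "a \<le> b" "0 \<le> \<sigma>"
  shows "\<sigma> * (b - a) / b * b powr (-\<sigma>) \<le> a powr (-\<sigma>) - b powr (-\<sigma>)"
proof -
  have ab: "0 < a / b" using assms by simp
  have "1 - a / b \<le> - ln (a / b)" using ln_le_minus_one[OF ab] by simp
  from mult_left_mono[OF this assms(3)]
  have "1 + \<sigma> * (1 - a / b) \<le> 1 + (- \<sigma> * ln (a / b))" by simp
  also have "\<dots> \<le> (a / b) powr (-\<sigma>)"
    using assms exp_ge_add_one_self[of "- \<sigma> * ln (a / b)"] by (simp add: powr_def)
  finally have "b powr (-\<sigma>) * (1 + \<sigma> * (1 - a / b)) \<le> b powr (-\<sigma>) * (a / b) powr (-\<sigma>)"
    by (intro mult_left_mono) auto
  also have "\<dots> = a powr (-\<sigma>)" using assms by (simp add: powr_divide powr_minus field_simps)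
  finally show ?thesis using assms by (simp add: field_simps)
qed

lemma powr_neg_diff_le:
  fixes a b \<sigma> :: real
  assumes "0 < a" "a \<le> b" "0 \<le> \<sigma>"
  shows "a powr (-\<sigma>) - b powr (-\<sigma>) \<le> \<sigma> * (b - a) / a * a powr (-\<sigma>)"
proof -
  have ba: "0 < b / a" using assms by simp
  have "\<sigma> * ln (b / a) \<le> \<sigma> * (b / a - 1)"
    using ln_le_minus_one[OF ba] assms(3) by (intro mult_left_mono) auto
  then have "1 - \<sigma> * (b / a - 1) \<le> 1 + (- \<sigma> * ln (b / a))" by simp
  also have "\<dots> \<le> (b / a) powr (-\<sigma>)"
    using assms exp_ge_add_one_self[of "- \<sigma> * ln (b / a)"] by (simp add: powr_def)
  finally have "a powr (-\<sigma>) * (1 - \<sigma> * (b / a - 1)) \<le> a powr (-\<sigma>) * (b / a) powr (-\<sigma>)"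
    by (intro mult_left_mono) auto
  also have "\<dots> = b powr (-\<sigma>)" using assms by (simp add: powr_divide powr_minus field_simps)
  finally show ?thesis using assms by (simp add: field_simps)
qed

lemma powr_neg_one_plus:
  fixes x :: real
  assumes "x > 0"
  shows "x powr (-(1 + \<sigma>)) = x powr (-\<sigma>) / x"
proof -
  have "-(1 + \<sigma>) = -\<sigma> - 1" by simp
  then show ?thesis using assms by (simp only: powr_diff powr_one)
qed

lemma sum_powr_neg_le:
  assumes "\<sigma> > 0"
  shows "(\<Sum>n\<in>{1..M}. real n powr (-(1 + \<sigma>))) \<le> 1 + 1 / \<sigma>"
proof (cases "M \<ge> 1")
  case False
  then show ?thesis using assms by simp
next
  case True
  have step: "real n powr (-(1 + \<sigma>)) \<le> (real (n - 1) powr (-\<sigma>) - real n powr (-\<sigma>)) / \<sigma>"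
    if "n \<ge> 2" for n
  proof -
    have "\<sigma> * (real n - real (n - 1)) / real n * real n powr (-\<sigma>)
        \<le> real (n - 1) powr (-\<sigma>) - real n powr (-\<sigma>)"
      using that assms by (intro powr_neg_diff_ge) auto
    then have "\<sigma> * real n powr (-(1 + \<sigma>)) \<le> real (n - 1) powr (-\<sigma>) - real n powr (-\<sigma>)"
      using that by (subst powr_neg_one_plus) (simp_all add: of_nat_diff)
    then show ?thesis using assms by (simp add: pos_le_divide_eq mult.commute)
  qed
  have "(\<Sum>n\<in>{1..M}. real n powr (-(1 + \<sigma>))) = 1 + (\<Sum>n\<in>{Suc 1..M}. real n powr (-(1 + \<sigma>)))"
    using True by (simp add: sum.atLeast_Suc_atMost)
  also have "\<dots> \<le> 1 + (\<Sum>n\<in>{Suc 1..M}. real (n - 1) powr (-\<sigma>) - real n powr (-\<sigma>)) / \<sigma>"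
    unfolding sum_divide_distrib by (intro add_left_mono sum_mono step) auto
  also have "(\<Sum>n\<in>{Suc 1..M}. real (n - 1) powr (-\<sigma>) - real n powr (-\<sigma>)) = 1 - real M powr (-\<sigma>)"
    using sum_telescope''[OF True, of "\<lambda>k. - (real k powr (-\<sigma>))"] by simp
  also have "1 + (1 - real M powr (-\<sigma>)) / \<sigma> \<le> 1 + 1 / \<sigma>"
    using assms by (simp add: divide_right_mono)
  finally show ?thesis .
qed

lemma sum_powr_neg_ge:
  assumes "\<sigma> > 0"
  shows "(1 - real (Suc N) powr (-\<sigma>)) / \<sigma> \<le> (\<Sum>n\<in>{1..N}. real n powr (-(1 + \<sigma>)))"
proof -
  have step: "(real n powr (-\<sigma>) - real (Suc n) powr (-\<sigma>)) / \<sigma> \<le> real n powr (-(1 + \<sigma>))"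
    if "n \<ge> 1" for n
  proof -
    have "real n powr (-\<sigma>) - real (Suc n) powr (-\<sigma>)
        \<le> \<sigma> * (real (Suc n) - real n) / real n * real n powr (-\<sigma>)"
      using that assms by (intro powr_neg_diff_le) auto
    then have "real n powr (-\<sigma>) - real (Suc n) powr (-\<sigma>) \<le> \<sigma> * real n powr (-(1 + \<sigma>))"
      using that by (subst powr_neg_one_plus) simp_all
    then show ?thesis using assms by (simp add: pos_divide_le_eq mult.commute)
  qed
  have "(\<Sum>n\<in>{1..N}. real n powr (-\<sigma>) - real (Suc n) powr (-\<sigma>)) = 1 - real (Suc N) powr (-\<sigma>)"
    using sum_Suc_diff[of 1 N "\<lambda>k. - (real k powr (-\<sigma>))"] by (cases N) simp_all
  then have "(1 - real (Suc N) powr (-\<sigma>)) / \<sigma>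
      = (\<Sum>n\<in>{1..N}. (real n powr (-\<sigma>) - real (Suc n) powr (-\<sigma>)) / \<sigma>)"
    by (simp add: sum_divide_distrib[symmetric])
  also have "\<dots> \<le> (\<Sum>n\<in>{1..N}. real n powr (-(1 + \<sigma>)))"
    by (intro sum_mono step) auto
  finally show ?thesis .
qed

section \<open>Bounds for Euler products over finitely many primes\<close>

definition sifted_set :: "nat set \<Rightarrow> nat \<Rightarrow> nat set" where
  "sifted_set A M = {n\<in>{1..M}. \<forall>p\<in>A. \<not> p dvd n}"

lemma finite_sifted_set [simp]: "finite (sifted_set A M)"
  by (simp add: sifted_set_def)

lemma power_powr_real: "(0::real) < x \<Longrightarrow> (x ^ k) powr a = (x powr a) ^ k"
  by (induction k) (auto simp: powr_mult)

lemma prime_powr_neg_less_1: "prime p \<Longrightarrow> s > 0 \<Longrightarrow> real p powr (-s) < 1"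
  using prime_ge_2_nat[of p] by (intro powr_less_one) auto

lemma sum_powr_sifted_multiples_le:
  assumes q: "prime q"
  shows "(\<Sum>n\<in>{n\<in>sifted_set A M. q dvd n}. real n powr (-s))
           \<le> real q powr (-s) * (\<Sum>n\<in>sifted_set A M. real n powr (-s))"
proof -
  define f where "f n = real n powr (-s)" for n
  let ?F = "sifted_set A M"
  have "{n\<in>?F. q dvd n} \<subseteq> (\<lambda>n. q * n) ` ?F"
  proof
    fix m assume m: "m \<in> {n\<in>?F. q dvd n}"
    then obtain n where n: "m = q * n" by auto
    have m1: "m \<in> {1..M}" "\<forall>p\<in>A. \<not> p dvd m" using m unfolding sifted_set_def by auto
    then have "n \<ge> 1" using n by (cases n) auto
    moreover have "n \<le> m" using n q prime_gt_0_nat[OF q] m1 by auto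
    moreover have "\<forall>p\<in>A. \<not> p dvd n" using m1 n by auto
    ultimately have "n \<in> ?F" using m1 unfolding sifted_set_def by auto
    then show "m \<in> (\<lambda>n. q * n) ` ?F" using n by auto
  qed
  then have "sum f {n\<in>?F. q dvd n} \<le> sum f ((\<lambda>n. q * n) ` ?F)"
    by (intro sum_mono2) (auto simp: f_def)
  also have "\<dots> \<le> sum (f \<circ> (\<lambda>n. q * n)) ?F"
    by (intro sum_image_le) (auto simp: f_def)
  also have "\<dots> = f q * sum f ?F"
    unfolding sum_distrib_left by (intro sum.cong refl) (auto simp: f_def powr_mult)
  finally show ?thesis unfolding f_def .
qed

lemma prod_one_minus_powr_mult_sum_le:
  assumes "finite A" "\<forall>p\<in>A. prime p" "s > 0"
  shows "(\<Prod>p\<in>A. 1 - real p powr (-s)) * (\<Sum>n\<in>{1..M}. real n powr (-s)) \<le> (\<Sum>n\<in>sifted_set A M. real n powr (-s))"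
  using assms(1,2)
proof (induction A rule: finite_induct)
  case empty
  have "sifted_set {} M = {1..M}" unfolding sifted_set_def by auto
  then show ?case by simp
next
  case (insert q A)
  define f where "f n = real n powr (-s)" for n
  have q: "prime q" using insert by auto
  have fq: "0 \<le> 1 - f q" unfolding f_def using prime_powr_neg_less_1[OF q assms(3)] by simp
  let ?F = "sifted_set A M"
  let ?Q = "{n\<in>?F. q dvd n}"
  have F': "sifted_set (insert q A) M = {n\<in>?F. \<not> q dvd n}" unfolding sifted_set_def by auto
  have split: "sum f ?F = sum f (sifted_set (insert q A) M) + sum f ?Q"
  proof -
    have "?F = {n\<in>?F. \<not> q dvd n} \<union> ?Q" by auto
    moreover have "sum f ({n\<in>?F. \<not> q dvd n} \<union> ?Q) = sum f {n\<in>?F. \<not> q dvd n} + sum f ?Q"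
      by (rule sum.union_disjoint) auto
    ultimately have "sum f ?F = sum f {n\<in>?F. \<not> q dvd n} + sum f ?Q" by simp
    then show ?thesis unfolding F' .
  qed
  have "(\<Prod>p\<in>insert q A. 1 - f p) * (\<Sum>n\<in>{1..M}. f n) = (1 - f q) * ((\<Prod>p\<in>A. 1 - f p) * (\<Sum>n\<in>{1..M}. f n))"
    using insert by simp
  also have "\<dots> \<le> (1 - f q) * sum f ?F"
    using insert fq unfolding f_def by (intro mult_left_mono) auto
  also have "\<dots> \<le> sum f (sifted_set (insert q A) M)"
    using split sum_powr_sifted_multiples_le[OF q, where A = A and M = M and s = s] unfolding f_def by (simp add: algebra_simps)
  finally show ?case unfolding f_def .
qed

lemma sifted_set_primes_atMost: "N \<ge> 1 \<Longrightarrow> sifted_set {p. prime p \<and> p \<le> N} N = {1}"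
proof -
  assume N: "N \<ge> 1"
  have "n = 1" if n: "n \<in> sifted_set {p. prime p \<and> p \<le> N} N" for n
  proof (rule ccontr)
    assume "n \<noteq> 1"
    then obtain p where p: "prime p" "p dvd n" using prime_factor_nat by blast
    have n1: "n \<ge> 1" "n \<le> N" using n unfolding sifted_set_def by auto
    have "p \<le> n" using p(2) n1 by (intro dvd_imp_le) auto
    then have "p \<in> {p. prime p \<and> p \<le> N}" using p n1 by auto
    moreover have "\<forall>q\<in>{p. prime p \<and> p \<le> N}. \<not> q dvd n" using n unfolding sifted_set_def by blast
    ultimately show False using p by blast
  qed
  moreover have "1 \<in> sifted_set {p. prime p \<and> p \<le> N} N" using N unfolding sifted_set_def
    by (auto dest: prime_gt_1_nat)
  ultimately show ?thesis by blast
qed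

lemma ln_sum_powr_le_sum_primes:
  assumes s: "s > 0" and N: "N \<ge> 1"
  shows "ln (\<Sum>n\<in>{1..N}. real n powr (-s)) \<le> (\<Sum>p | prime p \<and> p \<le> N. - ln (1 - real p powr (-s)))"
proof -
  let ?A = "{p. prime p \<and> p \<le> N}"
  let ?S = "\<Sum>n\<in>{1..N}. real n powr (-s)"
  let ?P = "\<Prod>p\<in>?A. 1 - real p powr (-s)"
  have pos: "0 < 1 - real p powr (-s)" if "p \<in> ?A" for p
    using prime_powr_neg_less_1[of p s] that s by auto
  then have P: "?P > 0" by (intro prod_pos) auto
  have "?P * ?S \<le> (\<Sum>n\<in>sifted_set ?A N. real n powr (-s))"
    using s by (intro prod_one_minus_powr_mult_sum_le) auto
  also have "\<dots> = 1" using N by (simp add: sifted_set_primes_atMost)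
  finally have "?S \<le> 1 / ?P" using P by (simp add: le_divide_eq mult.commute)
  moreover have "?S \<ge> 1" using N sum_mono2[of "{1..N}" "{1}" "\<lambda>n. real n powr (-s)"] by auto
  ultimately have "ln ?S \<le> ln (1 / ?P)" using P by (subst ln_le_cancel_iff) auto
  also have "\<dots> = - ln ?P" by (simp only: divide_inverse mult_1_left ln_inverse)
  also have "ln ?P = (\<Sum>p\<in>?A. ln (1 - real p powr (-s)))"
    by (rule ln_prod) (use pos in \<open>auto simp: less_imp_neq[symmetric]\<close>)
  finally show ?thesis by (simp add: sum_negf)
qed

lemma inj_on_prime_power_mult:
  fixes q :: nat
  assumes q: "prime q" and S: "0 \<notin> S" "\<forall>n\<in>S. \<not> q dvd n"
  shows "inj_on (\<lambda>(k, n). q ^ k * n) (K \<times> S)"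
proof (rule inj_onI, clarify)
  fix k n k' n' assume n: "n \<in> S" "n' \<in> S" and e: "q ^ k * n = q ^ k' * n'"
  have multiplicity: "multiplicity q (q ^ j * m) = j" if m: "m \<in> S" for j m
  proof -
    have "m \<noteq> 0" using S(1) m by (metis)
    then have "multiplicity q (q ^ j * m) = multiplicity q (q ^ j) + multiplicity q m"
      using q by (intro prime_elem_multiplicity_mult_distrib) auto
    also have "multiplicity q m = 0" using S(2) m by (auto intro: not_dvd_imp_multiplicity_0)
    also have "multiplicity q (q ^ j) = j" using q by (intro multiplicity_prime_power) auto
    finally show ?thesis by simp
  qed
  have "k = k'" using multiplicity[OF n(1), of k] multiplicity[OF n(2), of k'] e by simp
  with e q show "k = k' \<and> n = n'" by (simp add: prime_gt_0_nat)
qed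

text \<open>By unique factorisation, a product of truncated geometric series in \<open>p powr (-s)\<close>
  is a sum of \<open>n powr (-s)\<close> over distinct \<open>n\<close>.\<close>

lemma prod_sum_powers_eq_sum_smooth:
  assumes "finite A" "\<forall>p\<in>A. prime p"
  shows "\<exists>S. finite S \<and> 0 \<notin> S \<and> (\<forall>n\<in>S. \<forall>p. prime p \<longrightarrow> p dvd n \<longrightarrow> p \<in> A) \<and>
           (\<Prod>p\<in>A. \<Sum>k<K. (real p powr (-s)) ^ k) = (\<Sum>n\<in>S. real n powr (-s))"
  using assms
proof (induction A rule: finite_induct)
  case empty
  show ?case by (intro exI[of _ "{1}"]) auto
next
  case (insert q A)
  then obtain S where S: "finite S" "0 \<notin> S" "\<forall>n\<in>S. \<forall>p. prime p \<longrightarrow> p dvd n \<longrightarrow> p \<in> A"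
      "(\<Prod>p\<in>A. \<Sum>k<K. (real p powr (-s)) ^ k) = (\<Sum>n\<in>S. real n powr (-s))" by auto
  have q: "prime q" using insert by auto
  have q_ndvd: "\<forall>n\<in>S. \<not> q dvd n" using S(3) q insert(2) by auto
  define g where "g = (\<lambda>(k, n). q ^ k * n)"
  have inj: "inj_on g ({..<K} \<times> S)" unfolding g_def by (rule inj_on_prime_power_mult[OF q S(2) q_ndvd])
  define S' where "S' = g ` ({..<K} \<times> S)"
  show ?case
  proof (intro exI[of _ S'] conjI)
    show "finite S'" unfolding S'_def using S(1) by auto
    show "0 \<notin> S'" unfolding S'_def g_def using S(2) prime_gt_0_nat[OF q] by auto
    show "\<forall>n\<in>S'. \<forall>p. prime p \<longrightarrow> p dvd n \<longrightarrow> p \<in> insert q A"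
    proof (intro ballI allI impI)
      fix n p assume "n \<in> S'" and p: "prime p" "p dvd n"
      then obtain k m where km: "m \<in> S" "n = q ^ k * m" unfolding S'_def g_def by auto
      then have "p dvd q ^ k \<or> p dvd m" using p by (simp add: prime_dvd_mult_iff)
      then show "p \<in> insert q A"
        using S(3) km p q prime_dvd_power primes_dvd_imp_eq by blast
    qed
    have "(\<Sum>n\<in>S'. real n powr (-s)) = (\<Sum>x\<in>{..<K} \<times> S. real (g x) powr (-s))"
      unfolding S'_def by (subst sum.reindex[OF inj]) auto
    also have "\<dots> = (\<Sum>k<K. \<Sum>n\<in>S. (real q powr (-s)) ^ k * real n powr (-s))"
      unfolding g_def using prime_gt_0_nat[OF q]
      by (subst sum.cartesian_product) (intro sum.cong refl, auto simp: powr_mult power_powr_real)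
    also have "\<dots> = (\<Sum>k<K. (real q powr (-s)) ^ k) * (\<Sum>n\<in>S. real n powr (-s))"
      by (simp add: sum_product)
    also have "\<dots> = (\<Prod>p\<in>insert q A. \<Sum>k<K. (real p powr (-s)) ^ k)"
      using insert S(4) by simp
    finally show "(\<Prod>p\<in>insert q A. \<Sum>k<K. (real p powr (-s)) ^ k) = (\<Sum>n\<in>S'. real n powr (-s))" ..
  qed
qed

lemma prod_sum_powers_powr_le:
  assumes A: "finite A" "\<forall>p\<in>A. prime p" and s: "\<sigma> > 0"
  shows "(\<Prod>p\<in>A. \<Sum>k<K. (real p powr (-(1 + \<sigma>))) ^ k) \<le> 1 + 1 / \<sigma>"
proof -
  obtain S where S: "finite S" "0 \<notin> S"
    "(\<Prod>p\<in>A. \<Sum>k<K. (real p powr (-(1 + \<sigma>))) ^ k) = (\<Sum>n\<in>S. real n powr (-(1 + \<sigma>)))"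
    using prod_sum_powers_eq_sum_smooth[OF A, where K = K and s = "1 + \<sigma>"] by auto
  have "S \<subseteq> {1..Max S}"
  proof
    fix n assume n: "n \<in> S"
    then have "n \<noteq> 0" using S(2) by metis
    then show "n \<in> {1..Max S}" using n S(1) by (auto intro: Max_ge)
  qed
  then have "(\<Sum>n\<in>S. real n powr (-(1 + \<sigma>))) \<le> (\<Sum>n\<in>{1..Max S}. real n powr (-(1 + \<sigma>)))"
    by (intro sum_mono2) auto
  also have "\<dots> \<le> 1 + 1 / \<sigma>" by (rule sum_powr_neg_le[OF s])
  finally show ?thesis using S(3) by simp
qed

lemma sum_primes_neg_ln_le:
  assumes A: "finite A" "\<forall>p\<in>A. prime p" and s: "\<sigma> > 0"
  shows "(\<Sum>p\<in>A. - ln (1 - real p powr (-(1 + \<sigma>)))) \<le> ln (1 + 1 / \<sigma>)"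
proof -
  define x where "x p = real p powr (-(1 + \<sigma>))" for p
  have x: "0 < x p" "x p < 1" if "p \<in> A" for p
    using that A s prime_powr_neg_less_1[of p "1 + \<sigma>"] prime_gt_0_nat[of p] unfolding x_def by auto
  have "(\<lambda>K. \<Prod>p\<in>A. \<Sum>k<K. (x p) ^ k) \<longlonglongrightarrow> (\<Prod>p\<in>A. 1 / (1 - x p))"
  proof (intro tendsto_prod)
    fix p assume p: "p \<in> A"
    have "(\<lambda>k. (x p) ^ k) sums (1 / (1 - x p))" using x[OF p] by (intro geometric_sums) auto
    then show "(\<lambda>K. \<Sum>k<K. (x p) ^ k) \<longlonglongrightarrow> 1 / (1 - x p)" by (simp add: sums_def)
  qed
  then have le: "(\<Prod>p\<in>A. 1 / (1 - x p)) \<le> 1 + 1 / \<sigma>"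
    using prod_sum_powers_powr_le[OF A s] unfolding x_def by (intro LIMSEQ_le_const2) auto
  have pos: "0 < 1 / (1 - x p)" if "p \<in> A" for p using x[OF that] by simp
  have "(\<Sum>p\<in>A. - ln (1 - x p)) = (\<Sum>p\<in>A. ln (1 / (1 - x p)))"
    using x by (intro sum.cong refl) (simp add: ln_div)
  also have "\<dots> = ln (\<Prod>p\<in>A. 1 / (1 - x p))"
  proof (rule ln_prod[symmetric])
    fix p assume "p \<in> A"
    then show "1 / (1 - x p) \<noteq> 0" using pos[of p] by linarith
  qed (use A in auto)
  also have "\<dots> \<le> ln (1 + 1 / \<sigma>)"
    using le pos s by (subst ln_le_cancel_iff) (auto intro: prod_pos add_pos_pos)
  finally show ?thesis unfolding x_def .
qed

section \<open>Chebyshev's bound and Mertens' first theorem\<close>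

definition chebyshev_psi :: "nat \<Rightarrow> real" where "chebyshev_psi n = (\<Sum>d\<in>{1..n}. mangoldt d)"

lemma sum_indicator_dvd: "(\<Sum>m\<in>{1..n}. if d dvd m then 1 else 0 :: real) = real (n div d)"
proof (induction n)
  case 0 then show ?case by simp
next
  case (Suc n)
  have "{1..Suc n} = insert (Suc n) {1..n}" by auto
  then have "(\<Sum>m\<in>{1..Suc n}. if d dvd m then 1 else 0 :: real)
     = (if d dvd Suc n then 1 else 0) + real (n div d)" using Suc by simp
  also have "\<dots> = real (Suc n div d)"
    by (auto simp: div_Suc dvd_eq_mod_eq_0)
  finally show ?case .
qed

lemma ln_fact_eq_sum_mangoldt: "ln (fact n) = (\<Sum>d\<in>{1..n}. mangoldt d * real (n div d))"
proof -
  have "ln (fact n :: real) = (\<Sum>m\<in>{1..n}. ln (real m))"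
    unfolding fact_prod by (subst ln_prod[symmetric]) auto
  also have "\<dots> = (\<Sum>m\<in>{1..n}. \<Sum>d\<in>{1..n}. if d dvd m then mangoldt d else 0)"
  proof (intro sum.cong refl)
    fix m assume m: "m \<in> {1..n}"
    have "ln (real m) = (\<Sum>d | d dvd m. mangoldt d)" using m by (simp add: mangoldt_sum)
    also have "\<dots> = (\<Sum>d\<in>{1..n}. if d dvd m then mangoldt d else 0)"
      using m by (subst sum.inter_filter[symmetric]) (auto intro!: sum.cong dest: dvd_imp_le)
    finally show "ln (real m) = \<dots>" .
  qed
  also have "\<dots> = (\<Sum>d\<in>{1..n}. \<Sum>m\<in>{1..n}. if d dvd m then mangoldt d else 0)"
    by (rule sum.swap)
  also have "\<dots> = (\<Sum>d\<in>{1..n}. mangoldt d * real (n div d))"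
  proof (intro sum.cong refl)
    fix d
    have "(\<Sum>m\<in>{1..n}. if d dvd m then mangoldt d else 0) = mangoldt d * (\<Sum>m\<in>{1..n}. if d dvd m then 1 else (0::real))"
      by (subst sum_distrib_left) (intro sum.cong, auto)
    then show "(\<Sum>m\<in>{1..n}. if d dvd m then mangoldt d else 0) = mangoldt d * real (n div d)"
      by (simp only: sum_indicator_dvd)
  qed
  finally show ?thesis .
qed

lemma ln_central_binomial_eq_sum_mangoldt:
  "ln (real ((2 * n) choose n)) = (\<Sum>d\<in>{1..2 * n}. mangoldt d * (real ((2 * n) div d) - 2 * real (n div d)))"
proof -
  have "real ((2 * n) choose n) = fact (2 * n) / (fact n * fact n)"
    using binomial_fact[of n "2 * n"] by (simp add: mult_2)
  then have "ln (real ((2 * n) choose n)) = ln (fact (2 * n)) - 2 * ln (fact n)"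
    by (simp add: ln_div ln_mult)
  moreover have "2 * ln (fact n) = (\<Sum>d\<in>{1..2 * n}. mangoldt d * (2 * real (n div d)))"
  proof -
    have "ln (fact n :: real) = (\<Sum>d\<in>{1..2 * n}. mangoldt d * real (n div d))"
      unfolding ln_fact_eq_sum_mangoldt by (intro sum.mono_neutral_left) auto
    then show ?thesis by (simp add: sum_distrib_left algebra_simps)
  qed
  ultimately show ?thesis by (simp add: ln_fact_eq_sum_mangoldt sum_subtractf algebra_simps)
qed

lemma chebyshev_psi_double_diff_le: "chebyshev_psi (2 * n) - chebyshev_psi n \<le> 2 * real n * ln 2"
proof -
  have "chebyshev_psi (2 * n) - chebyshev_psi n = (\<Sum>d\<in>{1..2 * n}. if n < d then mangoldt d else 0)"
  proof -
    have "chebyshev_psi (2 * n) = (\<Sum>d\<in>{1..2 * n}. (if n < d then mangoldt d else 0) + (if n < d then 0 else mangoldt d))"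
      unfolding chebyshev_psi_def by (intro sum.cong) auto
    also have "\<dots> = (\<Sum>d\<in>{1..2 * n}. if n < d then mangoldt d else 0) + (\<Sum>d\<in>{1..2 * n}. if n < d then 0 else mangoldt d)"
      by (rule sum.distrib)
    also have "(\<Sum>d\<in>{1..2 * n}. if n < d then 0 else mangoldt d) = chebyshev_psi n"
      unfolding chebyshev_psi_def by (intro sum.mono_neutral_cong_right) auto
    finally show ?thesis by simp
  qed
  also have "\<dots> \<le> (\<Sum>d\<in>{1..2 * n}. mangoldt d * (real ((2 * n) div d) - 2 * real (n div d)))"
  proof (intro sum_mono)
    fix d assume d: "d \<in> {1..2 * n}"
    have "2 * (n div d) \<le> (2 * n) div d" using div_mult1_eq[of 2 n d] by simp
    then have nonneg: "real ((2 * n) div d) - 2 * real (n div d) \<ge> 0"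
      by (metis diff_ge_0_iff_ge of_nat_le_iff of_nat_mult of_nat_numeral)
    have "real ((2 * n) div d) - 2 * real (n div d) \<ge> 1" if "n < d"
    proof -
      have "n div d = 0" using that by simp
      moreover have "0 < (2 * n) div d" using d by (simp add: div_greater_zero_iff)
      ultimately show ?thesis by simp
    qed
    then show "(if n < d then mangoldt d else 0) \<le> mangoldt d * (real ((2 * n) div d) - 2 * real (n div d))"
      using nonneg mangoldt_nonneg[of d]
      by (auto intro: mult_nonneg_nonneg simp: mult_le_cancel_left1 dest: mult_left_mono[of 1 _ "mangoldt d"])
  qed
  also have "\<dots> = ln (real ((2 * n) choose n))" by (rule ln_central_binomial_eq_sum_mangoldt[symmetric])
  also have "\<dots> \<le> ln (2 ^ (2 * n))"
    using binomial_le_pow2[of "2 * n" n] by (subst ln_le_cancel_iff) (auto simp del: of_nat_power simp: of_nat_power[symmetric])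
  also have "\<dots> = 2 * real n * ln 2" by (simp add: ln_realpow)
  finally show ?thesis .
qed

lemma chebyshev_psi_le: "chebyshev_psi n \<le> 4 * real n"
proof (induction n rule: less_induct)
  case (less m)
  show ?case
  proof (cases "m = 0")
    case True then show ?thesis by (simp add: chebyshev_psi_def)
  next
    case False
    define n where "n = m div 2"
    have n: "n < m" using False unfolding n_def by auto
    have ev: "chebyshev_psi (2*n) \<le> 6 * real n"
    proof -
      have "2 * real n * ln 2 \<le> 2 * real n * 1" using ln_2_less_1 by (intro mult_left_mono) auto
      then show ?thesis using chebyshev_psi_double_diff_le[of n] less[OF n] by linarith
    qed
    show ?thesis
    proof (cases "even m")
      case True
      then have "m = 2*n" unfolding n_def by auto
      then show ?thesis using ev by simp
    next
      case False
      then have m: "m = Suc (2*n)" unfolding n_def by presburger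
      have "chebyshev_psi m = chebyshev_psi (2*n) + mangoldt m"
        unfolding chebyshev_psi_def m by simp
      also have "mangoldt m \<le> ln (real m)" using m by (intro mangoldt_le) auto
      also have "ln (real m) \<le> real m - 1" using m by (intro ln_le_minus_one) auto
      finally show ?thesis using ev m by simp
    qed
  qed
qed

lemma real_div_nat_bounds:
  assumes "d > 0"
  shows "real n / real d - 1 \<le> real (n div d)" "real (n div d) \<le> real n / real d"
proof -
  have e: "real n = real (n div d) * real d + real (n mod d)"
    by (metis div_mult_mod_eq of_nat_add of_nat_mult)
  have m: "real (n mod d) < real d" using assms by simp
  show "real n / real d - 1 \<le> real (n div d)"
    using assms e m by (simp add: field_simps)
  show "real (n div d) \<le> real n / real d"
    using assms e by (simp add: field_simps)
qed

lemma ln_fact_le: "ln (fact n :: real) \<le> real n * ln (real n)"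
proof (cases "n = 0")
  case True then show ?thesis by simp
next
  case False
  have "ln (fact n :: real) \<le> ln (real (n ^ n))"
    by (subst ln_le_cancel_iff) (use fact_le_power[of n, where 'a=real] in auto)
  also have "\<dots> = real n * ln (real n)" using False by (simp add: ln_realpow)
  finally show ?thesis .
qed

lemma ln_fact_ge: "real n * ln (real n) - real n \<le> ln (fact n :: real)"
proof (cases "n = 0")
  case True then show ?thesis by simp
next
  case False
  have "(\<lambda>k. real n ^ k /\<^sub>R fact k) sums exp (real n)" by (rule exp_converges)
  then have "(\<Sum>k\<in>{n}. real n ^ k /\<^sub>R fact k) \<le> exp (real n)"
    using sum_le_suminf[of "\<lambda>k. real n ^ k /\<^sub>R fact k" "{n}"] by (auto simp: sums_iff)
  then have "real n ^ n / fact n \<le> exp (real n)" by (simp add: divide_inverse mult.commute)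
  then have "ln (real n ^ n / fact n) \<le> ln (exp (real n))"
    using False by (subst ln_le_cancel_iff) auto
  then have "ln (real n ^ n / fact n) \<le> real n" by simp
  then show ?thesis using False by (simp add: ln_div ln_realpow)
qed

definition mangoldt_sum :: "nat \<Rightarrow> real" where "mangoldt_sum n = (\<Sum>d\<in>{1..n}. mangoldt d / real d)"

lemma mangoldt_sum_ge: "mangoldt_sum n \<ge> ln (real n) - 1"
proof (cases "n = 0")
  case True then show ?thesis by (simp add: mangoldt_sum_def)
next
  case False
  have "real n * ln (real n) - real n \<le> ln (fact n :: real)" by (rule ln_fact_ge)
  also have "\<dots> = (\<Sum>d\<in>{1..n}. mangoldt d * real (n div d))" by (rule ln_fact_eq_sum_mangoldt)
  also have "\<dots> \<le> (\<Sum>d\<in>{1..n}. mangoldt d * (real n / real d))"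
    by (intro sum_mono mult_left_mono real_div_nat_bounds mangoldt_nonneg) auto
  also have "\<dots> = real n * mangoldt_sum n" unfolding mangoldt_sum_def by (simp add: sum_distrib_left field_simps)
  finally have "real n * (ln (real n) - 1) \<le> real n * mangoldt_sum n" by (simp add: algebra_simps)
  then show ?thesis using False by simp
qed

lemma mangoldt_sum_le: "mangoldt_sum n \<le> ln (real n) + 4"
proof (cases "n = 0")
  case True then show ?thesis by (simp add: mangoldt_sum_def)
next
  case False
  have "real n * mangoldt_sum n - chebyshev_psi n = (\<Sum>d\<in>{1..n}. real n * (mangoldt d / real d) - mangoldt d)"
    unfolding mangoldt_sum_def chebyshev_psi_def by (simp add: sum_distrib_left sum_subtractf)
  also have "\<dots> = (\<Sum>d\<in>{1..n}. mangoldt d * (real n / real d - 1))"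
    by (intro sum.cong refl) (auto simp: field_simps)
  also have "\<dots> \<le> (\<Sum>d\<in>{1..n}. mangoldt d * real (n div d))"
    by (intro sum_mono mult_left_mono real_div_nat_bounds mangoldt_nonneg) auto
  also have "\<dots> = ln (fact n)" by (rule ln_fact_eq_sum_mangoldt[symmetric])
  also have "\<dots> \<le> real n * ln (real n)" by (rule ln_fact_le)
  finally have "real n * mangoldt_sum n \<le> real n * (ln (real n) + 4)"
    using chebyshev_psi_le[of n] by (simp add: algebra_simps)
  then show ?thesis using False by simp
qed

definition prime_log_sum :: "nat \<Rightarrow> real" where "prime_log_sum n = (\<Sum>d\<in>{1..n}. if prime d then ln (real d) / real d else 0)"

lemma sum_ln_div_prime_power_le:
  assumes "prime p"
  shows "(\<Sum>k\<in>{2..n}. ln (real p) / real p ^ k) \<le> ln (real p) / (real p * (real p - 1))"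
proof -
  define x where "x = 1 / real p"
  have p2: "real p \<ge> 2" using prime_ge_2_nat[OF assms] by simp
  have x: "0 < x" "x \<le> 1/2" unfolding x_def using p2 by auto
  have "(\<Sum>k\<in>{2..n}. x ^ k) \<le> x^2 / (1 - x)"
  proof (cases "n \<ge> 2")
    case False
    then have "{2..n} = {}" by auto
    then show ?thesis using x by simp
  next
    case True
    have e: "{..n} = {0,1} \<union> {2..n}" using True by auto
    have "(\<Sum>k\<le>n. x ^ k) = (\<Sum>k\<in>{0,1}. x ^ k) + (\<Sum>k\<in>{2..n}. x ^ k)"
      unfolding e by (rule sum.union_disjoint) auto
    then have "(\<Sum>k\<le>n. x ^ k) = 1 + x + (\<Sum>k\<in>{2..n}. x ^ k)" by simp
    moreover have "(\<Sum>k\<le>n. x ^ k) = (1 - x ^ Suc n) / (1 - x)"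
      using x by (subst sum_gp0) auto
    moreover have "(1 - x ^ Suc n) / (1 - x) \<le> 1 / (1 - x)"
      using x by (intro divide_right_mono) auto
    moreover have "1 / (1 - x) - 1 - x = x^2 / (1 - x)"
      using x by (simp add: field_simps power2_eq_square)
    ultimately show ?thesis by linarith
  qed
  moreover have "x^2 / (1 - x) = 1 / (real p * (real p - 1))"
    unfolding x_def using p2 by (simp add: field_simps power2_eq_square)
  ultimately have "(\<Sum>k\<in>{2..n}. x ^ k) \<le> 1 / (real p * (real p - 1))" by simp
  then have "ln (real p) * (\<Sum>k\<in>{2..n}. x ^ k) \<le> ln (real p) * (1 / (real p * (real p - 1)))"
    using p2 by (intro mult_left_mono) auto
  then show ?thesis unfolding x_def by (simp add: sum_distrib_left power_one_over divide_inverse power_inverse)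
qed

lemma ln_div_mult_pred_le:
  assumes "m \<ge> 2"
  shows "ln (real m) / (real m * (real m - 1)) \<le> 4 * real m powr (-(1 + 1/2))"
proof -
  define r where "r = sqrt (real m)"
  have r: "r > 0" "real m = r * r" using assms by (simp_all add: r_def)
  have "ln (real m) = 2 * ln r" unfolding r_def using assms by (simp add: ln_sqrt)
  also have "\<dots> \<le> 2 * r" using ln_le_minus_one[OF r(1)] by simp
  finally have "ln (real m) \<le> 2 * r" .
  moreover have "real m * (real m / 2) \<le> real m * (real m - 1)"
    using assms by (intro mult_left_mono) auto
  ultimately have "ln (real m) / (real m * (real m - 1)) \<le> 2 * r / (real m * (real m / 2))"
    using assms r(1) by (intro frac_le) simp_all
  also have "\<dots> = 4 * (1 / r / real m)" using r by (simp add: field_simps)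
  also have "1 / r = real m powr (-(1/2))"
    unfolding r_def using assms by (simp add: powr_minus_divide powr_half_sqrt)
  also have "real m powr (-(1/2)) / real m = real m powr (-(1 + 1/2))"
    using assms by (intro powr_neg_one_plus[symmetric]) simp
  finally show ?thesis .
qed

lemma sum_ln_div_mult_pred_le: "(\<Sum>m\<in>{2..n}. ln (real m) / (real m * (real m - 1))) \<le> 12"
proof -
  have "(\<Sum>m\<in>{2..n}. ln (real m) / (real m * (real m - 1))) \<le> (\<Sum>m\<in>{2..n}. 4 * real m powr (-(1 + 1/2)))"
    by (intro sum_mono ln_div_mult_pred_le) auto
  also have "\<dots> \<le> (\<Sum>m\<in>{1..n}. 4 * real m powr (-(1 + 1/2)))"
    by (intro sum_mono2) auto
  also have "\<dots> \<le> 4 * (1 + 1 / (1/2))"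
    unfolding sum_distrib_left[symmetric] by (intro mult_left_mono sum_powr_neg_le) auto
  finally show ?thesis by simp
qed

lemma proper_prime_powers_subset:
  "{d\<in>{1..n}. primepow d \<and> \<not> prime d} \<subseteq> (\<lambda>(p, k). p ^ k) ` ({p\<in>{1..n}. prime p} \<times> {2..n})"
proof
  fix d assume "d \<in> {d\<in>{1..n}. primepow d \<and> \<not> prime d}"
  then have d: "d \<in> {1..n}" "primepow d" "\<not> prime d" by auto
  then obtain p k where pk: "prime p" "k > 0" "d = p ^ k" unfolding primepow_def by auto
  have "k \<noteq> 1" using pk d by auto
  then have k2: "k \<ge> 2" using pk by auto
  have p2: "p \<ge> 2" using pk prime_ge_2_nat by auto
  have "k < 2 ^ k" by (rule less_exp)
  also have "2 ^ k \<le> p ^ k" using p2 by (rule power_mono) auto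
  finally have "k \<le> n" using d pk by auto
  moreover have "p \<le> p ^ k" using pk p2 by (simp add: self_le_power)
  ultimately have "(p, k) \<in> {p\<in>{1..n}. prime p} \<times> {2..n}" using d pk k2 p2 by auto
  then show "d \<in> (\<lambda>(p, k). p ^ k) ` ({p\<in>{1..n}. prime p} \<times> {2..n})" using pk by force
qed

lemma mangoldt_sum_minus_prime_log_sum: "0 \<le> mangoldt_sum n - prime_log_sum n" "mangoldt_sum n - prime_log_sum n \<le> 12"
proof -
  have eq: "mangoldt_sum n - prime_log_sum n = (\<Sum>d\<in>{1..n}. if prime d then 0 else mangoldt d / real d)"
    unfolding mangoldt_sum_def prime_log_sum_def by (subst sum_subtractf[symmetric]) (intro sum.cong refl, auto)
  show "0 \<le> mangoldt_sum n - prime_log_sum n" unfolding eq by (intro sum_nonneg) (auto intro: mangoldt_nonneg divide_nonneg_nonneg)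
  define D where "D = {p\<in>{1..n}. prime p} \<times> {2..n}"
  define g where "g = (\<lambda>(p::nat, k::nat). p ^ k)"
  define h where "h = (\<lambda>d. mangoldt d / real d :: real)"
  have h0: "h d \<ge> 0" for d unfolding h_def by (auto intro: mangoldt_nonneg divide_nonneg_nonneg)
  have "(\<Sum>d\<in>{1..n}. if prime d then 0 else mangoldt d / real d) = (\<Sum>d\<in>{d\<in>{1..n}. primepow d \<and> \<not> prime d}. h d)"
    unfolding h_def by (intro sum.mono_neutral_cong_right) (auto simp: mangoldt_def)
  also have "\<dots> \<le> (\<Sum>d\<in>g ` D. h d)"
    using proper_prime_powers_subset[of n] unfolding D_def g_def
    by (intro sum_mono2 finite_imageI) (auto intro: h0)
  also have "\<dots> \<le> (\<Sum>x\<in>D. (h \<circ> g) x)" unfolding D_def by (intro sum_image_le h0) auto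
  also have "\<dots> = (\<Sum>p\<in>{p\<in>{1..n}. prime p}. \<Sum>k\<in>{2..n}. ln (real p) / real p ^ k)"
    unfolding D_def by (subst sum.cartesian_product) (intro sum.cong refl, auto simp: g_def h_def split: prod.splits)
  also have "\<dots> \<le> (\<Sum>p\<in>{p\<in>{1..n}. prime p}. ln (real p) / (real p * (real p - 1)))"
    by (intro sum_mono sum_ln_div_prime_power_le) auto
  also have "\<dots> \<le> (\<Sum>m\<in>{2..n}. ln (real m) / (real m * (real m - 1)))"
  proof (intro sum_mono2)
    show "{p \<in> {1..n}. prime p} \<subseteq> {2..n}" using prime_ge_2_nat by auto
    fix m assume "m \<in> {2..n} - {p \<in> {1..n}. prime p}"
    then show "0 \<le> ln (real m) / (real m * (real m - 1))" by auto
  qed auto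
  also have "\<dots> \<le> 12" by (rule sum_ln_div_mult_pred_le)
  finally show "mangoldt_sum n - prime_log_sum n \<le> 12" unfolding eq .
qed

lemma abs_prime_log_sum_minus_ln_le: "n \<ge> 1 \<Longrightarrow> \<bar>prime_log_sum n - ln (real n)\<bar> \<le> 13"
  using mangoldt_sum_minus_prime_log_sum[of n] mangoldt_sum_ge[of n] mangoldt_sum_le[of n] by linarith

section \<open>Mertens' second theorem\<close>

lemma sum_by_parts:
  fixes f w :: "nat \<Rightarrow> real"
  assumes "m < N"
  shows "(\<Sum>n\<in>{Suc m..N}. (f n - f (n - 1)) * w n)
           = f N * w N - f m * w (Suc m) - (\<Sum>n\<in>{Suc m..<N}. f n * (w (Suc n) - w n))"
proof -
  from assms have "Suc m \<le> N" by simp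
  then show ?thesis
  proof (induction N rule: nat_induct_at_least)
    case base
    then show ?case by (simp add: algebra_simps)
  next
    case (Suc N)
    have "{Suc m..Suc N} = insert (Suc N) {Suc m..N}" "{Suc m..<Suc N} = insert N {Suc m..<N}"
      using Suc.hyps by auto
    then show ?case using Suc.IH by (simp add: algebra_simps)
  qed
qed

lemma ln_ratio_Suc_bounds:
  assumes "n \<ge> 3"
  shows "0 \<le> 1 - ln (real n) / ln (real (Suc n))" "1 - ln (real n) / ln (real (Suc n)) \<le> 3 / (2 * real n)"
proof -
  have "ln 2 \<le> ln (real (Suc n))" using assms by simp
  then have l: "ln (real (Suc n)) \<ge> 2/3" using ln2_ge_two_thirds by linarith
  have "1 + 1 / real n = real (Suc n) / real n" using assms by (simp add: field_simps)
  then have "ln (real (Suc n)) - ln (real n) = ln (1 + 1 / real n)"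
    using assms by (simp add: ln_divide_pos)
  also have "\<dots> \<le> 1 / real n" by (intro ln_add_one_self_le_self) auto
  finally have d: "ln (real (Suc n)) - ln (real n) \<le> 1 / real n" .
  have eq: "1 - ln (real n) / ln (real (Suc n)) = (ln (real (Suc n)) - ln (real n)) / ln (real (Suc n))"
    using l assms by (simp add: diff_divide_distrib)
  have "ln (real n) \<le> ln (real (Suc n))" using assms by simp
  then show "0 \<le> 1 - ln (real n) / ln (real (Suc n))"
    unfolding eq using l by (intro divide_nonneg_nonneg) auto
  have "(ln (real (Suc n)) - ln (real n)) / ln (real (Suc n)) \<le> (1 / real n) / (2/3)"
    using l d assms by (intro frac_le) auto
  then show "1 - ln (real n) / ln (real (Suc n)) \<le> 3 / (2 * real n)"
    unfolding eq by simp
qed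

lemma abs_ln_ln_Suc_diff_le:
  assumes "n \<ge> 3"
  shows "\<bar>ln (ln (real (Suc n))) - ln (ln (real n)) - (1 - ln (real n) / ln (real (Suc n)))\<bar>
           \<le> 5 * inverse (real n ^ 2)"
proof -
  define t where "t = 1 - ln (real n) / ln (real (Suc n))"
  have t: "0 \<le> t" "t \<le> 3 / (2 * real n)" using ln_ratio_Suc_bounds[OF assms] by (simp_all add: t_def)
  have "3 / (2 * real n) \<le> 1/2" using assms by (simp add: field_simps)
  then have t2: "t \<le> 1/2" using t by linarith
  have "ln (1 - t) = ln (ln (real n)) - ln (ln (real (Suc n)))"
    using assms by (simp add: t_def ln_div)
  then have eq: "ln (ln (real (Suc n))) - ln (ln (real n)) - t = - ln (1 - t) - t" by simp
  have "- t - 2 * t^2 \<le> ln (1 - t)" "ln (1 - t) \<le> - t"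
    using t t2 by (intro ln_one_minus_pos_lower_bound ln_one_minus_pos_upper_bound; simp)+
  moreover have "t^2 \<le> (3 / (2 * real n))^2" using t by (intro power_mono) auto
  moreover have "(3 / (2 * real n))^2 = (9/4) * inverse (real n ^ 2)"
    by (simp add: power_divide field_simps)
  ultimately show ?thesis unfolding t_def[symmetric] eq
    using inverse_nonnegative_iff_nonnegative[of "real n ^ 2"] by auto
qed

lemma summable_ln_ln_Suc_diff:
  "summable (\<lambda>n. ln (ln (real (Suc n))) - ln (ln (real n)) - (1 - ln (real n) / ln (real (Suc n))))"
proof (rule summable_comparison_test)
  show "\<exists>N. \<forall>n\<ge>N. norm (ln (ln (real (Suc n))) - ln (ln (real n)) - (1 - ln (real n) / ln (real (Suc n))))
                    \<le> 5 * inverse (real n ^ 2)"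
    using abs_ln_ln_Suc_diff_le by (intro exI[of _ 3]) auto
  show "summable (\<lambda>n. 5 * inverse (real n ^ 2))"
    by (intro summable_mult inverse_power_summable) auto
qed

lemma summable_bounded_mult_inverse_ln_diff:
  fixes R :: "nat \<Rightarrow> real"
  assumes "\<And>n. n \<ge> 1 \<Longrightarrow> \<bar>R n\<bar> \<le> C"
  shows "summable (\<lambda>n. R n * (1 / ln (real n) - 1 / ln (real (Suc n))))"
proof (rule summable_comparison_test)
  define u where "u n = 1 / ln (real n)" for n
  have u: "u \<longlonglongrightarrow> 0"
  proof -
    have "((\<lambda>x::real. 1 / ln x) \<longlongrightarrow> 0) at_top" by real_asymp
    then show ?thesis unfolding u_def by (rule filterlim_compose) (rule filterlim_real_sequentially)
  qed
  show "\<exists>N. \<forall>n\<ge>N. norm (R n * (1 / ln (real n) - 1 / ln (real (Suc n)))) \<le> C * (u n - u (Suc n))"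
  proof (intro exI[of _ 2] allI impI)
    fix n :: nat assume n: "n \<ge> 2"
    have "u (Suc n) \<le> u n" unfolding u_def using n by (intro divide_left_mono mult_pos_pos) auto
    then show "norm (R n * (1 / ln (real n) - 1 / ln (real (Suc n)))) \<le> C * (u n - u (Suc n))"
      using assms[of n] n unfolding u_def by (simp add: abs_mult mult_right_mono)
  qed
  show "summable (\<lambda>n. C * (u n - u (Suc n)))"
    by (intro summable_mult telescope_summable'[OF u])
qed

lemma div_ln_tendsto_1:
  fixes A :: "nat \<Rightarrow> real"
  assumes bounded: "\<And>n. n \<ge> 1 \<Longrightarrow> \<bar>A n - ln (real n)\<bar> \<le> C"
  shows "(\<lambda>N. A N / ln (real N)) \<longlonglongrightarrow> 1"
proof -
  have "((\<lambda>x::real. 1 / ln x) \<longlongrightarrow> 0) at_top" by real_asymp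
  then have "(\<lambda>N. 1 / ln (real N)) \<longlonglongrightarrow> 0" by (rule filterlim_compose) (rule filterlim_real_sequentially)
  then have "(\<lambda>N. (A N - ln (real N)) / ln (real N)) \<longlonglongrightarrow> 0"
  proof (rule Lim_null_comparison[OF _ tendsto_mult_right_zero[of _ _ C], rotated])
    show "\<forall>\<^sub>F N in sequentially. norm ((A N - ln (real N)) / ln (real N)) \<le> C * (1 / ln (real N))"
      using eventually_ge_at_top[of 2]
      by eventually_elim (use bounded in \<open>auto simp: divide_right_mono\<close>)
  qed
  from tendsto_add[OF tendsto_const[of 1] this] have "(\<lambda>N. 1 + (A N - ln (real N)) / ln (real N)) \<longlonglongrightarrow> 1"
    by simp
  moreover have "eventually (\<lambda>N. 1 + (A N - ln (real N)) / ln (real N) = A N / ln (real N)) sequentially"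
    using eventually_ge_at_top[of 2] by eventually_elim (auto simp: field_simps)
  ultimately show ?thesis by (rule Lim_transform_eventually)
qed

lemma sum_diff_div_ln_minus_ln_ln_eq:
  fixes A :: "nat \<Rightarrow> real"
  assumes N: "N \<ge> 2"
  defines "u \<equiv> \<lambda>n. 1 / ln (real n)"
  shows "(\<Sum>n\<in>{2..N}. (A n - A (n - 1)) / ln (real n)) - ln (ln (real N))
           = A N * u N - A 1 * u 2 - ln (ln 2)
             + (\<Sum>n\<in>{2..<N}. (A n - ln (real n)) * (u n - u (Suc n))
                 - (ln (ln (real (Suc n))) - ln (ln (real n)) - (1 - ln (real n) / ln (real (Suc n)))))"
proof -
  define t where "t n = 1 - ln (real n) / ln (real (Suc n))" for n
  define R where "R n = A n - ln (real n)" for n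
  have parts: "(\<Sum>n\<in>{2..N}. (A n - A (n - 1)) / ln (real n))
      = A N * u N - A 1 * u 2 - (\<Sum>n\<in>{2..<N}. A n * (u (Suc n) - u n))"
    using sum_by_parts[of 1 N A u] N by (simp add: u_def divide_inverse numeral_2_eq_2)
  have "A n * (u (Suc n) - u n) = - t n - R n * (u n - u (Suc n))" if "n \<ge> 2" for n
    using that by (simp add: R_def u_def t_def field_simps)
  then have "(\<Sum>n\<in>{2..<N}. A n * (u (Suc n) - u n)) = (\<Sum>n\<in>{2..<N}. - t n - R n * (u n - u (Suc n)))"
    by (intro sum.cong) auto
  also have "\<dots> = - (\<Sum>n\<in>{2..<N}. t n) - (\<Sum>n\<in>{2..<N}. R n * (u n - u (Suc n)))"
    by (simp add: sum_subtractf sum_negf)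
  finally have S1: "(\<Sum>n\<in>{2..<N}. A n * (u (Suc n) - u n))
      = - (\<Sum>n\<in>{2..<N}. t n) - (\<Sum>n\<in>{2..<N}. R n * (u n - u (Suc n)))" .
  have L: "ln (ln (real N)) - ln (ln 2) = (\<Sum>n\<in>{2..<N}. ln (ln (real (Suc n))) - ln (ln (real n)))"
    using sum_Suc_diff'[OF N, of "\<lambda>n. ln (ln (real n))"] by simp
  have "(\<Sum>n\<in>{2..<N}. R n * (u n - u (Suc n)) - (ln (ln (real (Suc n))) - ln (ln (real n)) - t n))
      = (\<Sum>n\<in>{2..<N}. R n * (u n - u (Suc n)))
        - ((\<Sum>n\<in>{2..<N}. ln (ln (real (Suc n))) - ln (ln (real n))) - (\<Sum>n\<in>{2..<N}. t n))"
    by (simp only: sum_subtractf)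
  then show ?thesis using parts S1 L unfolding R_def t_def by linarith
qed

lemma convergent_sum_diff_div_ln_minus_ln_ln:
  fixes A :: "nat \<Rightarrow> real"
  assumes bounded: "\<And>n. n \<ge> 1 \<Longrightarrow> \<bar>A n - ln (real n)\<bar> \<le> C"
  shows "convergent (\<lambda>N. (\<Sum>n\<in>{2..N}. (A n - A (n - 1)) / ln (real n)) - ln (ln (real N)))"
proof -
  define u where "u n = 1 / ln (real n)" for n
  define g where "g n = (A n - ln (real n)) * (u n - u (Suc n))
      - (ln (ln (real (Suc n))) - ln (ln (real n)) - (1 - ln (real n) / ln (real (Suc n))))" for n
  have R: "\<bar>A n - ln (real n)\<bar> \<le> C" if "n \<ge> 1" for n using bounded[OF that] .
  from summable_diff[OF summable_bounded_mult_inverse_ln_diff[OF R] summable_ln_ln_Suc_diff]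
  have "summable g" by (simp add: g_def[abs_def] u_def)
  then have lim_g: "(\<lambda>N. (\<Sum>n<N. g n) - (g 0 + g 1)) \<longlonglongrightarrow> suminf g - (g 0 + g 1)"
    by (intro tendsto_diff summable_LIMSEQ tendsto_const)
  have lim_Au: "(\<lambda>N. A N * u N) \<longlonglongrightarrow> 1"
    using div_ln_tendsto_1[OF bounded] by (simp add: u_def)
  have identity: "(\<Sum>n\<in>{2..N}. (A n - A (n - 1)) / ln (real n)) - ln (ln (real N))
      = A N * u N - A 1 * u 2 - ln (ln 2) + ((\<Sum>n<N. g n) - (g 0 + g 1))" if N: "N \<ge> 2" for N
  proof -
    have "(\<Sum>n<N. g n) = (\<Sum>n<2. g n) + (\<Sum>n\<in>{2..<N}. g n)"
      using sum.atLeastLessThan_concat[of 0 2 N g] N by (simp add: lessThan_atLeast0)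
    then show ?thesis
      using sum_diff_div_ln_minus_ln_ln_eq[OF N, of A] by (simp add: g_def u_def numeral_2_eq_2)
  qed
  have "(\<lambda>N. A N * u N - A 1 * u 2 - ln (ln 2) + ((\<Sum>n<N. g n) - (g 0 + g 1)))
          \<longlonglongrightarrow> 1 - A 1 * u 2 - ln (ln 2) + (suminf g - (g 0 + g 1))"
    by (intro tendsto_intros lim_Au lim_g)
  moreover have "eventually (\<lambda>N. A N * u N - A 1 * u 2 - ln (ln 2) + ((\<Sum>n<N. g n) - (g 0 + g 1))
      = (\<Sum>n\<in>{2..N}. (A n - A (n - 1)) / ln (real n)) - ln (ln (real N))) sequentially"
    using eventually_ge_at_top[of 2] by eventually_elim (rule identity[symmetric])
  ultimately show ?thesis
    unfolding convergent_def by (blast intro: Lim_transform_eventually)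
qed

definition prime_recip_sum :: "nat \<Rightarrow> real" where
  "prime_recip_sum N = (\<Sum>n\<in>{1..N}. if prime n then 1 / real n else 0)"

theorem mertens_second_theorem: "convergent (\<lambda>N. prime_recip_sum N - ln (ln (real N)))"
proof -
  have diff: "prime_log_sum n - prime_log_sum (n - 1) = (if prime n then ln (real n) / real n else 0)"
    if "n \<ge> 1" for n
  proof -
    have "{1..n} = insert n {1..n - 1}" using that by auto
    then show ?thesis unfolding prime_log_sum_def using that by simp
  qed
  have "prime_recip_sum N = (\<Sum>n\<in>{2..N}. (prime_log_sum n - prime_log_sum (n - 1)) / ln (real n))" for N
  proof -
    have "prime_recip_sum N = (\<Sum>n\<in>{2..N}. if prime n then 1 / real n else 0)"
      unfolding prime_recip_sum_def by (rule sum.mono_neutral_right) (auto dest: prime_ge_2_nat)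
    also have "\<dots> = (\<Sum>n\<in>{2..N}. (prime_log_sum n - prime_log_sum (n - 1)) / ln (real n))"
    proof (rule sum.cong)
      fix n assume "n \<in> {2..N}"
      then have "n \<ge> 1" "ln (real n) > 0" by auto
      then show "(if prime n then 1 / real n else 0) = (prime_log_sum n - prime_log_sum (n - 1)) / ln (real n)"
        using diff[of n] by simp
    qed simp
    finally show ?thesis .
  qed
  then show ?thesis
    using convergent_sum_diff_div_ln_minus_ln_ln[OF abs_prime_log_sum_minus_ln_le] by simp
qed

section \<open>Mertens' third theorem\<close>

definition euler_log_term :: "nat \<Rightarrow> real" where
  "euler_log_term n = (if prime n then - ln (1 - 1 / real n) else 0)"

definition mertens_log_sum :: "nat \<Rightarrow> real" where
  "mertens_log_sum N = (\<Sum>n\<in>{1..N}. euler_log_term n)"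

definition euler_log_excess :: "nat \<Rightarrow> real" where
  "euler_log_excess n = (if prime n then - ln (1 - 1 / real n) - 1 / real n else 0)"

lemma euler_log_excess_bounds: "0 \<le> euler_log_excess n \<and> euler_log_excess n \<le> 2 * inverse (real n ^ 2)"
proof (cases "prime n")
  case False then show ?thesis by (simp add: euler_log_excess_def)
next
  case True
  have n: "real n \<ge> 2" using prime_ge_2_nat[OF True] by simp
  define x where "x = 1 / real n"
  have x: "0 \<le> x" "x \<le> 1/2" unfolding x_def using n by auto
  have lo: "- x - 2 * x^2 \<le> ln (1 - x)" using x by (intro ln_one_minus_pos_lower_bound) auto
  have up: "ln (1 - x) \<le> - x" using x by (intro ln_one_minus_pos_upper_bound) auto
  have "x^2 = inverse (real n ^ 2)" unfolding x_def by (simp add: power_one_over divide_inverse power_inverse)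
  then show ?thesis using lo up True unfolding euler_log_excess_def x_def[symmetric] by auto
qed

lemma convergent_mertens_log_sum: "convergent (\<lambda>N. mertens_log_sum N - ln (ln (real N)))"
proof -
  have "summable euler_log_excess"
    by (rule summable_comparison_test[OF _ summable_mult[OF inverse_power_summable, of 2 2]])
       (use euler_log_excess_bounds in auto)
  then have "convergent (\<lambda>N. \<Sum>n<Suc N. euler_log_excess n)"
    unfolding convergent_def using summable_LIMSEQ LIMSEQ_Suc by blast
  moreover have "mertens_log_sum N - prime_recip_sum N = (\<Sum>n<Suc N. euler_log_excess n)" for N
  proof -
    have "mertens_log_sum N - prime_recip_sum N = (\<Sum>n\<in>{1..N}. euler_log_excess n)"
      unfolding mertens_log_sum_def prime_recip_sum_def euler_log_term_def euler_log_excess_def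
      by (subst sum_subtractf[symmetric]) (intro sum.cong refl, auto)
    also have "\<dots> = (\<Sum>n<Suc N. euler_log_excess n)"
      by (intro sum.mono_neutral_left) (auto simp: euler_log_excess_def dest: prime_gt_0_nat)
    finally show ?thesis .
  qed
  ultimately have "convergent (\<lambda>N. (mertens_log_sum N - prime_recip_sum N) + (prime_recip_sum N - ln (ln (real N))))"
    using mertens_second_theorem by (simp add: convergent_add)
  then show ?thesis by simp
qed

text \<open>\<open>harm (floor_ln n) = ln (ln n) + \<gamma> + o(1)\<close> is the comparison sequence for the Mertens
  sum: being a step function, its weighted sums against \<open>n powr (-\<sigma>)\<close> are explicit (\<open>log_series\<close>).\<close>

definition floor_ln :: "nat \<Rightarrow> nat" where "floor_ln n = nat \<lfloor>ln (real n)\<rfloor>"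

lemma floor_ln_bounds: "n \<ge> 1 \<Longrightarrow> ln (real n) - 1 < real (floor_ln n) \<and> real (floor_ln n) \<le> ln (real n)"
proof -
  assume n: "n \<ge> 1"
  then have l: "ln (real n) \<ge> 0" by simp
  then have "real (floor_ln n) = of_int \<lfloor>ln (real n)\<rfloor>" unfolding floor_ln_def by simp
  then show ?thesis by linarith
qed

lemma floor_ln_mono: "m \<le> n \<Longrightarrow> floor_ln m \<le> floor_ln n"
  unfolding floor_ln_def by (cases "m = 0") (auto intro!: nat_mono floor_mono)

lemma floor_ln_0 [simp]: "floor_ln 0 = 0" and floor_ln_1 [simp]: "floor_ln (Suc 0) = 0"
  by (simp_all add: floor_ln_def)

lemma filterlim_floor_ln: "filterlim floor_ln at_top sequentially"
  unfolding floor_ln_def by real_asymp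

lemma tendsto_harm_floor_ln_minus_ln_ln: "(\<lambda>n. harm (floor_ln n) - ln (ln (real n))) \<longlonglongrightarrow> euler_mascheroni"
proof -
  have h: "(\<lambda>n. harm (floor_ln n) - ln (real (floor_ln n)) :: real) \<longlonglongrightarrow> euler_mascheroni"
    using euler_mascheroni_LIMSEQ filterlim_floor_ln by (rule filterlim_compose)
  have q: "(\<lambda>n. real (floor_ln n) / ln (real n)) \<longlonglongrightarrow> 1"
  proof (rule real_tendsto_sandwich)
    show "eventually (\<lambda>n. (ln (real n) - 1) / ln (real n) \<le> real (floor_ln n) / ln (real n)) sequentially"
      using eventually_ge_at_top[of 2]
    proof eventually_elim
      case (elim n)
      then have "ln (real n) - 1 < real (floor_ln n)" using floor_ln_bounds[of n] by auto
      then show ?case using elim by (intro divide_right_mono) auto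
    qed
    show "eventually (\<lambda>n. real (floor_ln n) / ln (real n) \<le> 1) sequentially"
      using eventually_ge_at_top[of 2]
    proof eventually_elim
      case (elim n)
      then have "real (floor_ln n) \<le> ln (real n)" "ln (real n) > 0" using floor_ln_bounds[of n] by auto
      then show ?case by simp
    qed
    show "(\<lambda>n. (ln (real n) - 1) / ln (real n)) \<longlonglongrightarrow> 1" by real_asymp
    show "(\<lambda>n. 1::real) \<longlonglongrightarrow> 1" by simp
  qed
  have "(\<lambda>n. ln (real (floor_ln n) / ln (real n))) \<longlonglongrightarrow> ln 1"
    by (intro tendsto_ln q) simp
  then have l: "(\<lambda>n. ln (real (floor_ln n) / ln (real n))) \<longlonglongrightarrow> 0" by simp
  have "(\<lambda>n. (harm (floor_ln n) - ln (real (floor_ln n))) + ln (real (floor_ln n) / ln (real n))) \<longlonglongrightarrow> euler_mascheroni + 0"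
    by (intro tendsto_add h l)
  moreover have "eventually (\<lambda>n. (harm (floor_ln n) - ln (real (floor_ln n))) + ln (real (floor_ln n) / ln (real n)) = harm (floor_ln n) - ln (ln (real n))) sequentially"
  proof -
    have "eventually (\<lambda>n. floor_ln n \<ge> 1) sequentially" using filterlim_floor_ln by (simp add: filterlim_at_top)
    then show ?thesis using eventually_ge_at_top[of 2]
    proof eventually_elim
      case (elim n)
      then have "ln (real n) > 0" by simp
      then show ?case using elim by (simp add: ln_div)
    qed
  qed
  ultimately show ?thesis by (simp add: tendsto_cong)
qed

lemma sum_atLeast1_diff:
  fixes g :: "nat \<Rightarrow> real"
  assumes "lo \<le> hi"
  shows "(\<Sum>j\<in>{1..hi}. g j) - (\<Sum>j\<in>{1..lo}. g j) = (\<Sum>j\<in>{lo<..hi}. g j)"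
proof -
  have "{1..hi} = {1..lo} \<union> {lo<..hi}" using assms by auto
  moreover have "(\<Sum>j\<in>{1..lo} \<union> {lo<..hi}. g j) = (\<Sum>j\<in>{1..lo}. g j) + (\<Sum>j\<in>{lo<..hi}. g j)"
    by (rule sum.union_disjoint) auto
  ultimately show ?thesis by simp
qed

definition log_series :: "real \<Rightarrow> nat \<Rightarrow> real" where
  "log_series \<sigma> m = (\<Sum>j\<in>{1..m}. inverse (real j) * exp (-\<sigma>) ^ j)"

lemma log_series_tendsto:
  assumes s: "\<sigma> > 0"
  shows "log_series \<sigma> \<longlonglongrightarrow> - ln (1 - exp (-\<sigma>))"
proof -
  define x where "x = exp (-\<sigma>)"
  have x: "0 < x" "x < 1" unfolding x_def using s by auto
  have "(\<lambda>n. - ((- (-x)) ^ n) / real n) sums ln (1 + (-x))"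
    using x by (intro ln_series') auto
  then have "(\<lambda>n. - (- (x ^ n) / real n)) sums (- ln (1 - x))"
    by (intro sums_minus) simp
  then have "(\<lambda>n. x ^ n / real n) sums (- ln (1 - x))" by simp
  then have a: "(\<lambda>K. \<Sum>n<K. x ^ n / real n) \<longlonglongrightarrow> - ln (1 - x)" by (simp add: sums_def)
  have "(\<lambda>K. \<Sum>n<Suc K. x ^ n / real n) \<longlonglongrightarrow> - ln (1 - x)" using LIMSEQ_Suc[OF a] .
  moreover have "(\<Sum>n<Suc K. x ^ n / real n) = log_series \<sigma> K" for K
  proof -
    have "(\<Sum>n<Suc K. x ^ n / real n) = (\<Sum>n\<in>{1..K}. x ^ n / real n)"
      by (intro sum.mono_neutral_right) auto
    then show ?thesis unfolding log_series_def x_def by (simp add: divide_inverse mult.commute)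
  qed
  ultimately show ?thesis unfolding x_def by simp
qed

lemma powr_neg_le_exp_power:
  assumes "\<sigma> > 0" "n \<ge> 1" "real j \<le> ln (real n)"
  shows "real n powr (-\<sigma>) \<le> exp (-\<sigma>) ^ j"
proof -
  have "real n powr (-\<sigma>) = exp (-\<sigma> * ln (real n))" using assms by (simp add: powr_def)
  also have "\<dots> \<le> exp (-\<sigma> * real j)" using assms by (simp add: mult_left_mono)
  also have "\<dots> = exp (-\<sigma>) ^ j" by (simp add: exp_of_nat_mult[symmetric] mult.commute)
  finally show ?thesis .
qed

lemma powr_neg_ge_exp_power:
  assumes "\<sigma> > 0" "n \<ge> 2" "ln (real (n - 1)) < real j"
  shows "real n powr (-\<sigma>) \<ge> 2 powr (-\<sigma>) * exp (-\<sigma>) ^ j"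
proof -
  have "real (n-1) < exp (real j)" using assms
    by (metis exp_less_cancel_iff exp_ln of_nat_0_less_iff zero_less_diff Suc_1 Suc_le_eq)
  then have "real n < exp (real j) + 1" using assms by (simp add: of_nat_diff)
  also have "\<dots> \<le> 2 * exp (real j)" using one_le_exp_iff[of "real j"] by simp
  finally have "ln (real n) \<le> ln (2 * exp (real j))" using assms by (subst ln_le_cancel_iff) auto
  also have "\<dots> = ln 2 + real j" by (simp add: ln_mult)
  finally have l: "ln (real n) \<le> ln 2 + real j" .
  have "2 powr (-\<sigma>) * exp (-\<sigma>) ^ j = exp (-\<sigma> * (ln 2 + real j))"
    by (simp add: powr_def exp_of_nat_mult[symmetric] exp_add[symmetric] algebra_simps)
  also have "\<dots> \<le> exp (-\<sigma> * ln (real n))" using assms l by (simp add: mult_left_mono)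
  also have "\<dots> = real n powr (-\<sigma>)" using assms by (simp add: powr_def)
  finally show ?thesis .
qed

lemma harm_floor_ln_diff_powr_bounds:
  assumes s: "\<sigma> > 0" and n: "n \<ge> 1"
  defines "\<Delta>L \<equiv> log_series \<sigma> (floor_ln n) - log_series \<sigma> (floor_ln (n - 1))"
    and "\<Delta>H \<equiv> harm (floor_ln n) - harm (floor_ln (n - 1))"
  shows "\<Delta>H * real n powr (-\<sigma>) \<le> \<Delta>L" "2 powr (-\<sigma>) * \<Delta>L \<le> \<Delta>H * real n powr (-\<sigma>)"
proof -
  define J where "J = {floor_ln (n - 1)<..floor_ln n}"
  have mono: "floor_ln (n - 1) \<le> floor_ln n" by (rule floor_ln_mono) simp
  have L: "\<Delta>L = (\<Sum>j\<in>J. inverse (real j) * exp (-\<sigma>) ^ j)"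
    unfolding \<Delta>L_def J_def log_series_def by (rule sum_atLeast1_diff[OF mono])
  have H: "\<Delta>H = (\<Sum>j\<in>J. inverse (real j))"
    unfolding \<Delta>H_def J_def harm_def by (rule sum_atLeast1_diff[OF mono])
  show "\<Delta>H * real n powr (-\<sigma>) \<le> \<Delta>L"
    unfolding L H sum_distrib_right
  proof (intro sum_mono mult_left_mono)
    fix j assume "j \<in> J"
    then have "real j \<le> ln (real n)" using floor_ln_bounds[of n] n by (auto simp: J_def)
    then show "real n powr (-\<sigma>) \<le> exp (-\<sigma>) ^ j" using s n by (intro powr_neg_le_exp_power) auto
  qed auto
  show "2 powr (-\<sigma>) * \<Delta>L \<le> \<Delta>H * real n powr (-\<sigma>)"
  proof (cases "n = 1")
    case True
    then show ?thesis by (simp add: \<Delta>L_def \<Delta>H_def)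
  next
    case False
    then have n2: "n \<ge> 2" using n by auto
    show ?thesis unfolding L H sum_distrib_right sum_distrib_left
    proof (intro sum_mono)
      fix j assume j: "j \<in> J"
      have "ln (real (n - 1)) \<ge> 0" using n2 by simp
      moreover have "floor_ln (n - 1) < j" using j by (simp add: J_def)
      ultimately have "ln (real (n - 1)) < real j" unfolding floor_ln_def by linarith
      then have "2 powr (-\<sigma>) * exp (-\<sigma>) ^ j \<le> real n powr (-\<sigma>)"
        using s n2 by (intro powr_neg_ge_exp_power) auto
      then show "2 powr (-\<sigma>) * (inverse (real j) * exp (-\<sigma>) ^ j) \<le> inverse (real j) * real n powr (-\<sigma>)"
        by (simp add: mult_left_mono mult.left_commute)
    qed
  qed
qed

lemma harm_floor_ln_weighted_sum_bounds:
  fixes N :: nat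
  assumes s: "\<sigma> > 0"
  defines "Hw \<equiv> (\<Sum>n\<in>{1..N}. (harm (floor_ln n) - harm (floor_ln (n - 1))) * real n powr (-\<sigma>))"
  shows "Hw \<le> log_series \<sigma> (floor_ln N)" "2 powr (-\<sigma>) * log_series \<sigma> (floor_ln N) \<le> Hw"
proof -
  have tel: "(\<Sum>n\<in>{1..N}. log_series \<sigma> (floor_ln n) - log_series \<sigma> (floor_ln (n - 1)))
      = log_series \<sigma> (floor_ln N)"
    using sum_telescope''[of 0 N "\<lambda>n. log_series \<sigma> (floor_ln n)"] by (simp add: log_series_def)
  show "Hw \<le> log_series \<sigma> (floor_ln N)"
    unfolding Hw_def tel[symmetric] using harm_floor_ln_diff_powr_bounds(1)[OF s] by (intro sum_mono) auto
  show "2 powr (-\<sigma>) * log_series \<sigma> (floor_ln N) \<le> Hw"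
    unfolding Hw_def tel[symmetric] sum_distrib_left
    using harm_floor_ln_diff_powr_bounds(2)[OF s] by (intro sum_mono) auto
qed

lemma sum_by_parts_centered:
  fixes a w :: "nat \<Rightarrow> real"
  assumes a0: "a 0 = 0" and w1: "w 1 = 1" and N: "N \<ge> 1"
  shows "(\<Sum>n\<in>{1..N}. (a n - a (n - 1)) * w n) - d
           = (a N - d) * w N + (\<Sum>n\<in>{1..<N}. (a n - d) * (w n - w (Suc n)))"
proof -
  have parts: "(\<Sum>n\<in>{1..N}. (a n - a (n - 1)) * w n) = a N * w N - (\<Sum>n\<in>{1..<N}. a n * (w (Suc n) - w n))"
    using sum_by_parts[of 0 N a w] N a0 by simp
  have "(\<Sum>n\<in>{1..<N}. w n - w (Suc n)) = - (\<Sum>n\<in>{1..<N}. w (Suc n) - w n)"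
    by (simp add: sum_negf[symmetric])
  then have "(\<Sum>n\<in>{1..<N}. w n - w (Suc n)) = 1 - w N"
    using sum_Suc_diff'[OF N, of w] w1 by simp
  then have tel: "d * (\<Sum>n\<in>{1..<N}. w n - w (Suc n)) = d - d * w N"
    by (simp add: right_diff_distrib)
  have "(\<Sum>n\<in>{1..<N}. (a n - d) * (w n - w (Suc n)))
      = (\<Sum>n\<in>{1..<N}. a n * (w n - w (Suc n))) - d * (\<Sum>n\<in>{1..<N}. w n - w (Suc n))"
    by (subst sum_distrib_left) (simp only: left_diff_distrib sum_subtractf)
  moreover have "(\<Sum>n\<in>{1..<N}. a n * (w n - w (Suc n))) = - (\<Sum>n\<in>{1..<N}. a n * (w (Suc n) - w n))"
    by (simp add: sum_negf[symmetric] algebra_simps)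
  moreover have "(a N - d) * w N = a N * w N - d * w N" by (simp add: left_diff_distrib)
  ultimately show ?thesis using parts tel by linarith
qed

lemma abs_sum_diff_mult_powr_minus_le:
  fixes a :: "nat \<Rightarrow> real" and d \<epsilon> B :: real
  assumes s: "\<sigma> > 0" and n0: "n0 \<ge> 1" "N \<ge> n0" and a0: "a 0 = 0"
    and bnd: "\<And>n. \<bar>a n - d\<bar> \<le> \<epsilon> + (if n < n0 then B else 0)"
  shows "\<bar>(\<Sum>n\<in>{1..N}. (a n - a (n - 1)) * real n powr (-\<sigma>)) - d\<bar> \<le> \<epsilon> + B * (1 - real n0 powr (-\<sigma>))"
proof -
  define w where "w n = real n powr (-\<sigma>)" for n
  define dw where "dw n = w n - w (Suc n)" for n
  have dw0: "dw n \<ge> 0" if "n \<ge> 1" for n unfolding dw_def w_def using that s by (simp add: powr_mono2')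
  have tel: "(\<Sum>n\<in>{1..<M}. dw n) = 1 - w M" if "M \<ge> 1" for M
  proof -
    have "(\<Sum>n\<in>{1..<M}. dw n) = - (\<Sum>n\<in>{1..<M}. w (Suc n) - w n)"
      unfolding dw_def by (simp add: sum_negf[symmetric])
    then show ?thesis using sum_Suc_diff'[OF that, of w] by (simp add: w_def)
  qed
  have N1: "N \<ge> 1" using n0 by simp
  have eq: "(\<Sum>n\<in>{1..N}. (a n - a (n - 1)) * w n) - d = (a N - d) * w N + (\<Sum>n\<in>{1..<N}. (a n - d) * dw n)"
    unfolding dw_def by (rule sum_by_parts_centered[where a = a and w = w]) (use a0 N1 in \<open>simp_all add: w_def\<close>)
  have "\<bar>(a N - d) * w N\<bar> \<le> \<epsilon> * w N"
    using bnd[of N] n0 by (simp add: w_def abs_mult mult_right_mono)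
  moreover have "\<bar>\<Sum>n\<in>{1..<N}. (a n - d) * dw n\<bar> \<le> (\<Sum>n\<in>{1..<N}. (\<epsilon> + (if n < n0 then B else 0)) * dw n)"
  proof -
    have "\<bar>\<Sum>n\<in>{1..<N}. (a n - d) * dw n\<bar> \<le> (\<Sum>n\<in>{1..<N}. \<bar>a n - d\<bar> * dw n)"
      using dw0 by (auto intro!: order.trans[OF sum_abs] sum_mono simp: abs_mult)
    also have "\<dots> \<le> (\<Sum>n\<in>{1..<N}. (\<epsilon> + (if n < n0 then B else 0)) * dw n)"
      using dw0 bnd by (intro sum_mono mult_right_mono) auto
    finally show ?thesis .
  qed
  moreover have "(\<Sum>n\<in>{1..<N}. (\<epsilon> + (if n < n0 then B else 0)) * dw n) = \<epsilon> * (1 - w N) + B * (1 - w n0)"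
  proof -
    have "(\<Sum>n\<in>{1..<N}. (if n < n0 then B else 0) * dw n) = (\<Sum>n\<in>{1..<n0}. B * dw n)"
      using n0 by (intro sum.mono_neutral_cong_right) auto
    then show ?thesis
      using tel[OF N1] tel[OF n0(1)] by (simp add: distrib_right sum.distrib sum_distrib_left[symmetric])
  qed
  ultimately have "\<bar>(\<Sum>n\<in>{1..N}. (a n - a (n - 1)) * w n) - d\<bar> \<le> \<epsilon> * w N + (\<epsilon> * (1 - w N) + B * (1 - w n0))"
    unfolding eq by (smt (verit) abs_triangle_ineq)
  then show ?thesis unfolding w_def by (simp add: algebra_simps)
qed

lemma neg_ln_one_minus_ge_tangent:
  fixes a c :: real
  assumes "0 \<le> a" "a < 1" "0 \<le> c" "c < 1"
  shows "- ln (1 - c) \<ge> - ln (1 - a) + (c - a) / (1 - a)"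
proof -
  have "ln ((1 - c) / (1 - a)) \<le> (1 - c) / (1 - a) - 1"
    using assms by (intro ln_le_minus_one) auto
  also have "(1 - c) / (1 - a) - 1 = (a - c) / (1 - a)" using assms by (simp add: field_simps)
  finally have "ln (1 - c) - ln (1 - a) \<le> (a - c) / (1 - a)" using assms by (simp add: ln_div)
  moreover have "(a - c) / (1 - a) = - ((c - a) / (1 - a))" by (metis minus_diff_eq minus_divide_left)
  ultimately show ?thesis by linarith
qed

lemma abs_mult_neg_ln_one_minus_diff_le:
  fixes t x :: real
  assumes t: "0 \<le> t" "t \<le> 1" and x: "0 \<le> x" "x \<le> 1/2"
  shows "\<bar>t * (- ln (1 - x)) - (- ln (1 - t * x))\<bar> \<le> 2 * (1 - t) * x^2"
proof -
  have tx: "0 \<le> t * x" "t * x \<le> x" using t x by (auto intro: mult_left_le_one_le)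
  have fx1: "- ln (1 - x) \<ge> x" using ln_one_minus_pos_upper_bound[of x] x by auto
  have fx2: "- ln (1 - x) \<le> x + 2 * x^2" using ln_one_minus_pos_lower_bound[of x] x by auto
  have up1: "- ln (1 - t * x) \<ge> - ln (1 - x) + (t * x - x) / (1 - x)"
    using tx x by (intro neg_ln_one_minus_ge_tangent) auto
  have "(t * x - x) / (1 - x) = - ((1 - t) * (x / (1 - x)))" using x by (simp add: field_simps)
  then have up2: "- ln (1 - t * x) \<ge> - ln (1 - x) - (1 - t) * (x / (1 - x))" using up1 by simp
  have "x / (1 - x) - x = x^2 / (1 - x)" using x by (simp add: field_simps power2_eq_square)
  also have "\<dots> \<le> x^2 / (1/2)" using x by (intro divide_left_mono) auto
  finally have xx: "x / (1 - x) - x \<le> 2 * x^2" by simp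
  have "t * (- ln (1 - x)) - (- ln (1 - t * x)) \<le> (1 - t) * (x / (1 - x) - (- ln (1 - x)))"
    using up2 by (simp add: algebra_simps)
  also have "\<dots> \<le> (1 - t) * (2 * x^2)"
    using t fx1 xx by (intro mult_left_mono) auto
  finally have U0: "t * (- ln (1 - x)) - (- ln (1 - t * x)) \<le> (1 - t) * (2 * x^2)" .
  have "(1 - t) * (2 * x^2) = 2 * (1 - t) * x^2" by simp
  then have U: "t * (- ln (1 - x)) - (- ln (1 - t * x)) \<le> 2 * (1 - t) * x^2" using U0 by linarith
  have lo1: "- ln (1 - x) \<ge> - ln (1 - t * x) + (x - t * x) / (1 - t * x)"
    using tx x by (intro neg_ln_one_minus_ge_tangent) auto
  have tx1: "t * x < 1" using tx x by linarith
  have "(x - t * x) / (1 - t * x) \<ge> (x - t * x) / 1"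
    using tx x t tx1 by (intro divide_left_mono) (auto simp: algebra_simps mult_left_le_one_le)
  then have lo2: "- ln (1 - t * x) \<le> - ln (1 - x) - (1 - t) * x" using lo1 by (simp add: algebra_simps)
  have "t * (- ln (1 - x)) - (- ln (1 - t * x)) \<ge> (1 - t) * (x - (- ln (1 - x)))"
    using lo2 by (simp add: algebra_simps)
  moreover have "(1 - t) * (x - (- ln (1 - x))) \<ge> (1 - t) * (- 2 * x^2)"
    using t fx2 by (intro mult_left_mono) auto
  moreover have "(1 - t) * (- 2 * x^2) = - (2 * (1 - t) * x^2)" by simp
  ultimately have L: "t * (- ln (1 - x)) - (- ln (1 - t * x)) \<ge> - (2 * (1 - t) * x^2)" by linarith
  show ?thesis using U L by linarith
qed

lemma abs_euler_log_powr_diff_le: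
  assumes p: "prime p" and s: "\<sigma> > 0"
  shows "\<bar>(- ln (1 - 1 / real p)) * real p powr (-\<sigma>) - (- ln (1 - real p powr (-(1 + \<sigma>))))\<bar>
          \<le> 2 * \<sigma> * ln (real p) / real p ^ 2"
proof -
  have p2: "real p \<ge> 2" using prime_ge_2_nat[OF p] by simp
  define t where "t = real p powr (-\<sigma>)"
  define x where "x = 1 / real p"
  have t: "0 \<le> t" "t \<le> 1" unfolding t_def using p2 s by (auto intro: powr_le1 powr_less_one[THEN less_imp_le])
  have x: "0 \<le> x" "x \<le> 1/2" unfolding x_def using p2 by auto
  have tx: "t * x = real p powr (-(1 + \<sigma>))"
    unfolding t_def x_def using p2 by (subst powr_neg_one_plus) simp_all
  have "1 - t \<le> \<sigma> * ln (real p)"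
  proof -
    have "t = exp (- \<sigma> * ln (real p))" unfolding t_def using p2 by (simp add: powr_def)
    moreover have "exp (- \<sigma> * ln (real p)) \<ge> 1 + (- \<sigma> * ln (real p))" by (rule exp_ge_add_one_self)
    ultimately show ?thesis by simp
  qed
  then have "2 * (1 - t) * x^2 \<le> 2 * (\<sigma> * ln (real p)) * x^2"
    using t by (intro mult_right_mono mult_left_mono) auto
  also have "\<dots> = 2 * \<sigma> * ln (real p) / real p ^ 2" unfolding x_def by (simp add: power_one_over divide_inverse power_inverse)
  finally have b: "2 * (1 - t) * x^2 \<le> 2 * \<sigma> * ln (real p) / real p ^ 2" .
  have "\<bar>t * (- ln (1 - x)) - (- ln (1 - t * x))\<bar> \<le> 2 * (1 - t) * x^2"
    using t x by (rule abs_mult_neg_ln_one_minus_diff_le)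
  then show ?thesis using b unfolding tx by (simp add: t_def x_def mult.commute)
qed

lemma abs_weighted_euler_log_sum_diff_le:
  assumes s: "\<sigma> > 0"
  shows "\<bar>(\<Sum>n\<in>{1..N}. euler_log_term n * real n powr (-\<sigma>)) - (\<Sum>p\<in>{p. prime p \<and> p \<le> N}. - ln (1 - real p powr (-(1 + \<sigma>))))\<bar> \<le> 24 * \<sigma>"
proof -
  let ?A = "{p. prime p \<and> p \<le> N}"
  have e: "(\<Sum>n\<in>{1..N}. euler_log_term n * real n powr (-\<sigma>)) = (\<Sum>p\<in>?A. (- ln (1 - 1 / real p)) * real p powr (-\<sigma>))"
  proof -
    have "(\<Sum>n\<in>{1..N}. euler_log_term n * real n powr (-\<sigma>)) = (\<Sum>n\<in>{1..N}. if prime n then (- ln (1 - 1 / real n)) * real n powr (-\<sigma>) else 0)"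
      unfolding euler_log_term_def by (intro sum.cong refl) auto
    also have "\<dots> = (\<Sum>n\<in>{n\<in>{1..N}. prime n}. (- ln (1 - 1 / real n)) * real n powr (-\<sigma>))"
      by (rule sum.inter_filter[symmetric]) auto
    also have "{n\<in>{1..N}. prime n} = ?A" using prime_ge_1_nat by auto
    finally show ?thesis .
  qed
  have "\<bar>(\<Sum>p\<in>?A. (- ln (1 - 1 / real p)) * real p powr (-\<sigma>)) - (\<Sum>p\<in>?A. - ln (1 - real p powr (-(1 + \<sigma>))))\<bar>
        \<le> (\<Sum>p\<in>?A. \<bar>(- ln (1 - 1 / real p)) * real p powr (-\<sigma>) - (- ln (1 - real p powr (-(1 + \<sigma>))))\<bar>)"
    unfolding sum_subtractf[symmetric] by (rule sum_abs)
  also have "\<dots> \<le> (\<Sum>p\<in>?A. 2 * \<sigma> * ln (real p) / real p ^ 2)"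
    using abs_euler_log_powr_diff_le s by (intro sum_mono) auto
  also have "\<dots> \<le> (\<Sum>p\<in>?A. 2 * \<sigma> * (ln (real p) / (real p * (real p - 1))))"
  proof (intro sum_mono)
    fix p assume "p \<in> ?A"
    then have p2: "real p \<ge> 2" using prime_ge_2_nat by auto
    have "ln (real p) / real p ^ 2 \<le> ln (real p) / (real p * (real p - 1))"
      using p2 by (intro divide_left_mono) (auto simp: power2_eq_square)
    then show "2 * \<sigma> * ln (real p) / real p ^ 2 \<le> 2 * \<sigma> * (ln (real p) / (real p * (real p - 1)))"
      using s by (simp add: mult_left_mono divide_inverse mult.assoc)
  qed
  also have "\<dots> = 2 * \<sigma> * (\<Sum>p\<in>?A. ln (real p) / (real p * (real p - 1)))" by (simp add: sum_distrib_left)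
  also have "(\<Sum>p\<in>?A. ln (real p) / (real p * (real p - 1))) \<le> (\<Sum>m\<in>{2..N}. ln (real m) / (real m * (real m - 1)))"
  proof (intro sum_mono2)
    show "?A \<subseteq> {2..N}" using prime_ge_2_nat by auto
    fix m assume "m \<in> {2..N} - ?A"
    then show "0 \<le> ln (real m) / (real m * (real m - 1))" by auto
  qed auto
  also have "\<dots> \<le> 12" by (rule sum_ln_div_mult_pred_le)
  finally show ?thesis unfolding e using s by (simp add: mult_left_mono)
qed

definition mertens_remainder :: "nat \<Rightarrow> real" where
  "mertens_remainder n = mertens_log_sum n - harm (floor_ln n)"

lemma euler_log_sum_bounds:
  fixes d \<epsilon> B :: real
  assumes s: "\<sigma> > 0" and e: "\<epsilon> \<ge> 0" and B: "B \<ge> 0" and n0: "n0 \<ge> 1" "N \<ge> n0"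
    and bnd: "\<And>n. \<bar>mertens_remainder n - d\<bar> \<le> \<epsilon> + (if n < n0 then B else 0)"
  defines "E \<equiv> (\<Sum>p | prime p \<and> p \<le> N. - ln (1 - real p powr (-(1 + \<sigma>))))"
    and "U \<equiv> \<epsilon> + B * (1 - real n0 powr (-\<sigma>)) + 24 * \<sigma>"
  shows "2 powr (-\<sigma>) * log_series \<sigma> (floor_ln N) + d - U \<le> E"
    and "E \<le> log_series \<sigma> (floor_ln N) + d + U"
proof -
  define Hw where "Hw = (\<Sum>n\<in>{1..N}. (harm (floor_ln n) - harm (floor_ln (n - 1))) * real n powr (-\<sigma>))"
  define Rw where "Rw = (\<Sum>n\<in>{1..N}. (mertens_remainder n - mertens_remainder (n - 1)) * real n powr (-\<sigma>))"
  have euler_term: "euler_log_term n = mertens_log_sum n - mertens_log_sum (n - 1)" if "n \<ge> 1" for n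
  proof -
    have "{1..n} = insert n {1..n - 1}" using that by auto
    then show ?thesis unfolding mertens_log_sum_def using that by simp
  qed
  have "(\<Sum>n\<in>{1..N}. euler_log_term n * real n powr (-\<sigma>)) = Hw + Rw"
    unfolding Hw_def Rw_def sum.distrib[symmetric]
  proof (intro sum.cong refl)
    fix n assume "n \<in> {1..N}"
    then have e: "euler_log_term n = mertens_log_sum n - mertens_log_sum (n - 1)" by (intro euler_term) simp
    show "euler_log_term n * real n powr (-\<sigma>)
        = (harm (floor_ln n) - harm (floor_ln (n - 1))) * real n powr (-\<sigma>)
          + (mertens_remainder n - mertens_remainder (n - 1)) * real n powr (-\<sigma>)"
      unfolding e mertens_remainder_def by (simp add: algebra_simps)
  qed
  moreover have "\<bar>(\<Sum>n\<in>{1..N}. euler_log_term n * real n powr (-\<sigma>)) - E\<bar> \<le> 24 * \<sigma>"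
    unfolding E_def using s by (rule abs_weighted_euler_log_sum_diff_le)
  moreover have "\<bar>Rw - d\<bar> \<le> \<epsilon> + B * (1 - real n0 powr (-\<sigma>))"
    unfolding Rw_def using s e B n0 bnd
    by (intro abs_sum_diff_mult_powr_minus_le) (auto simp: mertens_remainder_def mertens_log_sum_def harm_def)
  moreover have "2 powr (-\<sigma>) * log_series \<sigma> (floor_ln N) \<le> Hw" "Hw \<le> log_series \<sigma> (floor_ln N)"
    unfolding Hw_def using harm_floor_ln_weighted_sum_bounds[OF s] by auto
  ultimately show "2 powr (-\<sigma>) * log_series \<sigma> (floor_ln N) + d - U \<le> E"
    and "E \<le> log_series \<sigma> (floor_ln N) + d + U"
    unfolding U_def by linarith+
qed

lemma euler_log_sum_limit_bounds:
  fixes d \<epsilon> B :: real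
  assumes s: "\<sigma> > 0" and e: "\<epsilon> \<ge> 0" and B: "B \<ge> 0" and n0: "n0 \<ge> 1"
    and bnd: "\<And>n. \<bar>mertens_remainder n - d\<bar> \<le> \<epsilon> + (if n < n0 then B else 0)"
  defines "U \<equiv> \<epsilon> + B * (1 - real n0 powr (-\<sigma>)) + 24 * \<sigma>"
  shows "2 powr (-\<sigma>) * (- ln (1 - exp (-\<sigma>))) + d - U \<le> ln (1 + 1 / \<sigma>)"
    and "ln (1 / \<sigma>) \<le> - ln (1 - exp (-\<sigma>)) + d + U"
proof -
  define E where "E N = (\<Sum>p | prime p \<and> p \<le> N. - ln (1 - real p powr (-(1 + \<sigma>))))" for N
  note bounds = euler_log_sum_bounds[OF s e B n0 _ bnd, folded E_def U_def]
  have E_le: "E N \<le> ln (1 + 1 / \<sigma>)" for N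
    unfolding E_def using s by (intro sum_primes_neg_ln_le) auto
  have E_ge: "ln ((1 - real (Suc N) powr (-\<sigma>)) / \<sigma>) \<le> E N" if "N \<ge> 1" for N
  proof -
    have "0 < (1 - real (Suc N) powr (-\<sigma>)) / \<sigma>"
      using s powr_less_one[of "real (Suc N)" "-\<sigma>"] that by auto
    then have "ln ((1 - real (Suc N) powr (-\<sigma>)) / \<sigma>) \<le> ln (\<Sum>n\<in>{1..N}. real n powr (-(1 + \<sigma>)))"
      using sum_powr_neg_ge[OF s, of N] by (subst ln_le_cancel_iff) auto
    also have "\<dots> \<le> E N" unfolding E_def using s that by (intro ln_sum_powr_le_sum_primes) auto
    finally show ?thesis .
  qed
  have L: "(\<lambda>N. log_series \<sigma> (floor_ln N)) \<longlonglongrightarrow> - ln (1 - exp (-\<sigma>))"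
    using log_series_tendsto[OF s] filterlim_floor_ln by (rule filterlim_compose)
  show "2 powr (-\<sigma>) * (- ln (1 - exp (-\<sigma>))) + d - U \<le> ln (1 + 1 / \<sigma>)"
  proof (rule LIMSEQ_le_const2)
    show "(\<lambda>N. 2 powr (-\<sigma>) * log_series \<sigma> (floor_ln N) + d - U) \<longlonglongrightarrow> 2 powr (-\<sigma>) * (- ln (1 - exp (-\<sigma>))) + d - U"
      by (intro tendsto_intros L)
    show "\<exists>N0. \<forall>N\<ge>N0. 2 powr (-\<sigma>) * log_series \<sigma> (floor_ln N) + d - U \<le> ln (1 + 1 / \<sigma>)"
      using bounds(1) E_le by (meson order_trans)
  qed
  have "(\<lambda>N. ln ((1 - real (Suc N) powr (-\<sigma>)) / \<sigma>)) \<longlonglongrightarrow> ln ((1 - 0) / \<sigma>)"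
  proof (intro tendsto_intros)
    show "(\<lambda>N. real (Suc N) powr (-\<sigma>)) \<longlonglongrightarrow> 0"
      using s by (intro tendsto_neg_powr filterlim_compose[OF filterlim_real_sequentially] filterlim_Suc) auto
  qed (use s in auto)
  then have "ln ((1 - 0) / \<sigma>) \<le> - ln (1 - exp (-\<sigma>)) + d + U"
  proof (rule LIMSEQ_le)
    show "(\<lambda>N. log_series \<sigma> (floor_ln N) + d + U) \<longlonglongrightarrow> - ln (1 - exp (-\<sigma>)) + d + U"
      by (intro tendsto_intros L)
    show "\<exists>N0. \<forall>N\<ge>N0. ln ((1 - real (Suc N) powr (-\<sigma>)) / \<sigma>) \<le> log_series \<sigma> (floor_ln N) + d + U"
      using bounds(2) E_ge n0 by (meson order_trans le_trans)
  qed
  then show "ln (1 / \<sigma>) \<le> - ln (1 - exp (-\<sigma>)) + d + U" by simp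
qed

text \<open>As \<open>\<sigma> \<rightarrow> 0+\<close>, both \<open>ln (1 + 1 / \<sigma>)\<close> and \<open>ln (1 / \<sigma>)\<close> are \<open>- ln (1 - exp (-\<sigma>)) + o(1)\<close>,
  so the two bounds of \<open>euler_log_sum_limit_bounds\<close> squeeze \<open>d\<close> into \<open>[-\<epsilon>, \<epsilon>]\<close>.\<close>

lemma abs_le_of_mertens_remainder_bound:
  fixes d \<epsilon> B :: real
  assumes e: "\<epsilon> > 0" and B: "B \<ge> 0" and n0: "n0 \<ge> 1"
    and bnd: "\<And>n. \<bar>mertens_remainder n - d\<bar> \<le> \<epsilon> + (if n < n0 then B else 0)"
  shows "\<bar>d\<bar> \<le> \<epsilon>"
proof -
  define V where "V \<sigma> = B * (1 - real n0 powr (-\<sigma>)) + 24 * \<sigma>" for \<sigma> :: real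
  have "((\<lambda>\<sigma>::real. B * (1 - real n0 powr (-\<sigma>)) + 24 * \<sigma>) \<longlongrightarrow> B * (1 - real n0 powr (-0)) + 24 * 0) (at_right 0)"
    using n0 by (intro tendsto_intros) auto
  then have V: "(V \<longlongrightarrow> 0) (at_right 0)" unfolding V_def using n0 by simp
  have pos: "eventually (\<lambda>\<sigma>::real. \<sigma> > 0) (at_right 0)" by (simp add: eventually_at_right_less)
  have a1: "((\<lambda>\<sigma>::real. ln (1 + 1/\<sigma>) - 2 powr (-\<sigma>) * (- ln (1 - exp (-\<sigma>)))) \<longlongrightarrow> 0) (at_right 0)"
    by real_asymp
  have a2: "((\<lambda>\<sigma>::real. ln (1/\<sigma>) + ln (1 - exp (-\<sigma>))) \<longlongrightarrow> 0) (at_right 0)"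
    by real_asymp
  have upper: "d - \<epsilon> \<le> 0"
  proof (rule tendsto_le[OF _ _ tendsto_const])
    show "((\<lambda>\<sigma>. V \<sigma> + (ln (1 + 1/\<sigma>) - 2 powr (-\<sigma>) * (- ln (1 - exp (-\<sigma>))))) \<longlongrightarrow> 0) (at_right 0)"
      using tendsto_add[OF V a1] by simp
    show "eventually (\<lambda>\<sigma>. d - \<epsilon> \<le> V \<sigma> + (ln (1 + 1/\<sigma>) - 2 powr (-\<sigma>) * (- ln (1 - exp (-\<sigma>))))) (at_right 0)"
      using pos
    proof eventually_elim
      case (elim \<sigma>)
      show ?case using euler_log_sum_limit_bounds(1)[OF elim _ B n0 bnd] e unfolding V_def by auto
    qed
  qed simp
  have lower: "0 \<le> d + \<epsilon>"
  proof (rule tendsto_le[OF _ tendsto_const])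
    show "((\<lambda>\<sigma>. (ln (1/\<sigma>) + ln (1 - exp (-\<sigma>))) - V \<sigma>) \<longlongrightarrow> 0) (at_right 0)"
      using tendsto_diff[OF a2 V] by simp
    show "eventually (\<lambda>\<sigma>. (ln (1/\<sigma>) + ln (1 - exp (-\<sigma>))) - V \<sigma> \<le> d + \<epsilon>) (at_right 0)"
      using pos
    proof eventually_elim
      case (elim \<sigma>)
      show ?case using euler_log_sum_limit_bounds(2)[OF elim _ B n0 bnd] e unfolding V_def by auto
    qed
  qed simp
  show ?thesis using upper lower by linarith
qed

theorem mertens_log_sum_asymptotics:
  "(\<lambda>N. mertens_log_sum N - ln (ln (real N))) \<longlonglongrightarrow> euler_mascheroni"
proof -
  obtain c where c: "(\<lambda>N. mertens_log_sum N - ln (ln (real N))) \<longlonglongrightarrow> c"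
    using convergent_mertens_log_sum by (auto simp: convergent_def)
  define d where "d = c - euler_mascheroni"
  have "(\<lambda>n. (mertens_log_sum n - ln (ln (real n))) - (harm (floor_ln n) - ln (ln (real n)))) \<longlonglongrightarrow> d"
    unfolding d_def by (intro tendsto_diff c tendsto_harm_floor_ln_minus_ln_ln)
  then have conv: "mertens_remainder \<longlonglongrightarrow> d" by (simp add: mertens_remainder_def[abs_def])
  then have "convergent (\<lambda>n. mertens_remainder n - d)"
    unfolding convergent_def using tendsto_diff[OF conv tendsto_const[of d]] by blast
  then have "Bseq (\<lambda>n. mertens_remainder n - d)" by (rule convergent_imp_Bseq)
  then obtain B where B: "B > 0" "\<And>n. norm (mertens_remainder n - d) \<le> B"
    by (auto elim: BseqE)
  have "\<bar>d\<bar> \<le> \<epsilon>" if e: "\<epsilon> > 0" for \<epsilon>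
  proof -
    obtain n1 where n1: "\<And>n. n \<ge> n1 \<Longrightarrow> \<bar>mertens_remainder n - d\<bar> < \<epsilon>"
      using LIMSEQ_D[OF conv e] by auto
    define n0 where "n0 = max n1 1"
    have "\<bar>mertens_remainder n - d\<bar> \<le> \<epsilon> + (if n < n0 then B else 0)" for n
      using B(2)[of n] n1[of n] e by (cases "n < n0") (auto simp: n0_def not_less)
    then show ?thesis using e B(1) by (intro abs_le_of_mertens_remainder_bound[of \<epsilon> B n0]) (auto simp: n0_def)
  qed
  then have "d = 0" using field_le_epsilon[of "\<bar>d\<bar>" 0] by simp
  then show ?thesis using c by (simp add: d_def)
qed

definition mertens_product :: "nat \<Rightarrow> real" where
  "mertens_product N = (\<Prod>p\<in>{p. prime p \<and> p \<le> N}. real p / (real p - 1))"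

lemma exp_mertens_log_sum: "exp (mertens_log_sum N) = mertens_product N"
proof -
  let ?A = "{p. prime p \<and> p \<le> N}"
  have "mertens_log_sum N = (\<Sum>n\<in>{n\<in>{1..N}. prime n}. - ln (1 - 1 / real n))"
    unfolding mertens_log_sum_def euler_log_term_def by (subst sum.inter_filter) auto
  also have "{n\<in>{1..N}. prime n} = ?A" using prime_ge_1_nat by auto
  also have "(\<Sum>n\<in>?A. - ln (1 - 1 / real n)) = (\<Sum>p\<in>?A. ln (real p / (real p - 1)))"
  proof (intro sum.cong refl)
    fix p assume "p \<in> ?A"
    then have p2: "real p \<ge> 2" using prime_ge_2_nat by auto
    have "1 - 1 / real p = (real p - 1) / real p" using p2 by (simp add: field_simps)
    then have "ln (1 - 1 / real p) = ln (real p - 1) - ln (real p)" using p2 by (simp add: ln_div)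
    moreover have "ln (real p / (real p - 1)) = ln (real p) - ln (real p - 1)" using p2 by (simp add: ln_div)
    ultimately show "- ln (1 - 1 / real p) = ln (real p / (real p - 1))" by simp
  qed
  finally have "exp (mertens_log_sum N) = (\<Prod>p\<in>?A. exp (ln (real p / (real p - 1))))" by (simp add: exp_sum)
  also have "\<dots> = mertens_product N" unfolding mertens_product_def
  proof (intro prod.cong refl)
    fix p assume "p \<in> ?A"
    then have p2: "real p \<ge> 2" using prime_ge_2_nat by auto
    then show "exp (ln (real p / (real p - 1))) = real p / (real p - 1)" by simp
  qed
  finally show ?thesis .
qed

lemma mertens_product_pos: "mertens_product N > 0"
  unfolding mertens_product_def by (intro prod_pos) (auto dest: prime_ge_2_nat)

theorem mertens_third_theorem: "(\<lambda>N. mertens_product N / ln (real N)) \<longlonglongrightarrow> exp euler_mascheroni"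
proof -
  have "(\<lambda>N. exp (mertens_log_sum N - ln (ln (real N)))) \<longlonglongrightarrow> exp euler_mascheroni"
    using mertens_log_sum_asymptotics by (intro tendsto_exp) simp
  moreover have "eventually (\<lambda>N. exp (mertens_log_sum N - ln (ln (real N))) = mertens_product N / ln (real N)) sequentially"
  proof (rule eventually_sequentiallyI[of 2])
    fix N :: nat assume "N \<ge> 2"
    then have "ln (real N) > 0" by simp
    then show "exp (mertens_log_sum N - ln (ln (real N))) = mertens_product N / ln (real N)" by (simp add: exp_diff exp_mertens_log_sum)
  qed
  ultimately show ?thesis by (simp add: tendsto_cong)
qed

lemma mertens_third_theorem_real: "((\<lambda>y. mertens_product (nat \<lfloor>y\<rfloor>) / ln y) \<longlongrightarrow> exp euler_mascheroni) at_top"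
proof -
  have "((\<lambda>y. mertens_product (nat \<lfloor>y\<rfloor>) / ln (real (nat \<lfloor>y\<rfloor>)) * (ln (real (nat \<lfloor>y\<rfloor>)) / ln y))
          \<longlongrightarrow> exp euler_mascheroni * 1) at_top"
  proof (rule tendsto_mult)
    have "filterlim (\<lambda>y::real. nat \<lfloor>y\<rfloor>) sequentially at_top" by real_asymp
    then show "((\<lambda>y::real. mertens_product (nat \<lfloor>y\<rfloor>) / ln (real (nat \<lfloor>y\<rfloor>))) \<longlongrightarrow> exp euler_mascheroni) at_top"
      using mertens_third_theorem by (rule filterlim_compose[rotated])
    show "((\<lambda>y. ln (real (nat \<lfloor>y\<rfloor>)) / ln y) \<longlongrightarrow> 1) at_top" by real_asymp
  qed
  moreover have "eventually (\<lambda>y. mertens_product (nat \<lfloor>y\<rfloor>) / ln (real (nat \<lfloor>y\<rfloor>)) * (ln (real (nat \<lfloor>y\<rfloor>)) / ln y)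
      = mertens_product (nat \<lfloor>y\<rfloor>) / ln y) at_top"
    using eventually_ge_at_top[of "3::real"]
  proof eventually_elim
    case (elim y)
    have "real (nat \<lfloor>y\<rfloor>) \<ge> 2" using elim by linarith
    then have "ln (real (nat \<lfloor>y\<rfloor>)) > 0" by (intro ln_gt_zero) linarith
    then show ?case by simp
  qed
  ultimately show ?thesis by (simp add: Lim_transform_eventually)
qed

section \<open>The ratio \<open>n / \<phi>(n)\<close>\<close>

lemma real_div_totient_eq_prod:
  assumes "n > 0"
  shows "real n / real (totient n) = (\<Prod>p\<in>prime_factors n. real p / (real p - 1))"
proof -
  have p2: "real p \<ge> 2" if "p \<in> prime_factors n" for p
    using that prime_ge_2_nat by (auto simp: prime_factors_multiplicity)
  have "(\<Prod>p\<in>prime_factors n. real p / (real p - 1)) * (\<Prod>p\<in>prime_factors n. 1 - 1 / real p)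
      = (\<Prod>p\<in>prime_factors n. real p / (real p - 1) * (1 - 1 / real p))"
    by (rule prod.distrib[symmetric])
  also have "\<dots> = 1"
  proof (rule prod.neutral, rule ballI)
    fix p assume "p \<in> prime_factors n"
    then have "real p \<ge> 2" by (rule p2)
    then show "real p / (real p - 1) * (1 - 1 / real p) = 1" by (simp add: field_simps)
  qed
  finally have inv: "(\<Prod>p\<in>prime_factors n. real p / (real p - 1)) * (\<Prod>p\<in>prime_factors n. 1 - 1 / real p) = 1" .
  then have "(\<Prod>p\<in>prime_factors n. 1 - 1 / real p) \<noteq> 0" by (metis mult_zero_right zero_neq_one)
  with inv assms show ?thesis
    by (subst totient_formula2) (simp add: field_simps)
qed

lemma prod_prime_factors_le:
  assumes "n > 0"
  shows "(\<Prod>p\<in>prime_factors n. real p) \<le> real n"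
proof -
  have "(\<Prod>p\<in>prime_factors n. p) \<le> (\<Prod>p\<in>prime_factors n. p ^ multiplicity p n)"
  proof (intro prod_mono conjI)
    fix p assume p: "p \<in> prime_factors n"
    then have "multiplicity p n > 0" "p > 0" by (auto simp: prime_factors_multiplicity prime_gt_0_nat)
    then show "p \<le> p ^ multiplicity p n" by (simp add: self_le_power)
  qed auto
  also have "\<dots> = n" using assms by (intro prime_factorization_nat[symmetric]) auto
  finally have "(\<Prod>p\<in>prime_factors n. p) \<le> n" .
  then have "real (\<Prod>p\<in>prime_factors n. p) \<le> real n" by (simp only: of_nat_le_iff)
  then show ?thesis by simp
qed

lemma card_large_prime_factors_mult_ln_le:
  assumes "n > 0" "y \<ge> 1"
  shows "real (card {p\<in>prime_factors n. y < real p}) * ln y \<le> ln (real n)"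
proof -
  define C where "C = {p\<in>prime_factors n. y < real p}"
  have "y ^ card C = (\<Prod>p\<in>C. y)" by simp
  also have "\<dots> \<le> (\<Prod>p\<in>C. real p)"
    using assms by (intro prod_mono) (auto simp: C_def)
  also have "\<dots> \<le> (\<Prod>p\<in>prime_factors n. real p)"
  proof (rule prod_mono2)
    fix p assume "p \<in> prime_factors n - C"
    then show "1 \<le> real p" using prime_ge_1_nat by (auto simp: in_prime_factors_iff)
  qed (auto simp: C_def)
  also have "\<dots> \<le> real n" using assms(1) by (rule prod_prime_factors_le)
  finally have "ln (y ^ card C) \<le> ln (real n)" using assms by (subst ln_le_cancel_iff) auto
  then show ?thesis using assms by (simp add: C_def ln_realpow)
qed

lemma prod_small_prime_factors_le_mertens_product:
  "(\<Prod>p\<in>{p\<in>prime_factors n. real p \<le> y}. real p / (real p - 1)) \<le> mertens_product (nat \<lfloor>y\<rfloor>)"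
  unfolding mertens_product_def
proof (rule prod_mono2)
  show "{p\<in>prime_factors n. real p \<le> y} \<subseteq> {p. prime p \<and> p \<le> nat \<lfloor>y\<rfloor>}"
    by (auto simp: in_prime_factors_iff le_nat_floor)
  fix p assume "p \<in> {p. prime p \<and> p \<le> nat \<lfloor>y\<rfloor>} - {p\<in>prime_factors n. real p \<le> y}"
  then have "real p \<ge> 2" using prime_ge_2_nat by auto
  then show "1 \<le> real p / (real p - 1)" by simp
next
  fix p assume "p \<in> {p\<in>prime_factors n. real p \<le> y}"
  then have "real p \<ge> 2" using prime_ge_2_nat by (auto simp: in_prime_factors_iff)
  then show "0 \<le> real p / (real p - 1)" by simp
qed simp

lemma prod_large_prime_factors_le:
  assumes n: "n > 0" and y: "y > 1"
  shows "(\<Prod>p\<in>{p\<in>prime_factors n. y < real p}. real p / (real p - 1)) \<le> exp (ln (real n) / ((y - 1) * ln y))"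
proof -
  define C where "C = {p\<in>prime_factors n. y < real p}"
  have "(\<Prod>p\<in>C. real p / (real p - 1)) \<le> (\<Prod>p\<in>C. exp (1 / (y - 1)))"
  proof (rule prod_mono, rule conjI)
    fix p assume "p \<in> C"
    then have p: "real p > y" "real p \<ge> 2"
      using prime_ge_2_nat by (auto simp: C_def in_prime_factors_iff)
    then show "0 \<le> real p / (real p - 1)" by simp
    have "real p / (real p - 1) = 1 + 1 / (real p - 1)" using p by (simp add: field_simps)
    also have "\<dots> \<le> 1 + 1 / (y - 1)" using p y by (intro add_left_mono divide_left_mono) auto
    also have "\<dots> \<le> exp (1 / (y - 1))" using exp_ge_add_one_self[of "1 / (y - 1)"] by simp
    finally show "real p / (real p - 1) \<le> exp (1 / (y - 1))" .
  qed
  also have "\<dots> = exp (real (card C) * (1 / (y - 1)))" by (simp only: prod_constant exp_of_nat_mult)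
  also have "\<dots> \<le> exp (ln (real n) / ((y - 1) * ln y))"
  proof -
    have "real (card C) * ln y \<le> ln (real n)"
      unfolding C_def using n y by (intro card_large_prime_factors_mult_ln_le) auto
    then have "real (card C) \<le> ln (real n) / ln y" using y by (simp add: field_simps)
    then have "real (card C) * (1 / (y - 1)) \<le> ln (real n) / ln y * (1 / (y - 1))"
      using y by (intro mult_right_mono) auto
    then show ?thesis by (simp add: field_simps)
  qed
  finally show ?thesis unfolding C_def .
qed

lemma ratio_totient_le_mertens_product:
  assumes "ln (real n) \<ge> 3"
  shows "real n / real (totient n)
           \<le> mertens_product (nat \<lfloor>ln (real n)\<rfloor>) * exp (ln (real n) / ((ln (real n) - 1) * ln (ln (real n))))"
proof -
  define y where "y = ln (real n)"
  define f where "f p = real p / (real p - 1)" for p :: nat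
  have n: "n > 0" using assms by (cases n) auto
  have "prime_factors n \<inter> {p. real p \<le> y} = {p\<in>prime_factors n. real p \<le> y}"
    "prime_factors n - {p. real p \<le> y} = {p\<in>prime_factors n. y < real p}" by auto
  then have "real n / real (totient n)
      = prod f {p\<in>prime_factors n. real p \<le> y} * prod f {p\<in>prime_factors n. y < real p}"
    using prod.Int_Diff[of "prime_factors n" f "{p. real p \<le> y}"]
    unfolding real_div_totient_eq_prod[OF n] f_def by simp
  also have "\<dots> \<le> mertens_product (nat \<lfloor>y\<rfloor>) * exp (ln (real n) / ((y - 1) * ln y))"
  proof (rule mult_mono)
    show "prod f {p\<in>prime_factors n. real p \<le> y} \<le> mertens_product (nat \<lfloor>y\<rfloor>)"
      unfolding f_def by (rule prod_small_prime_factors_le_mertens_product)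
    show "prod f {p\<in>prime_factors n. y < real p} \<le> exp (ln (real n) / ((y - 1) * ln y))"
      unfolding f_def using n assms by (intro prod_large_prime_factors_le) (auto simp: y_def)
    show "0 \<le> mertens_product (nat \<lfloor>y\<rfloor>)" using mertens_product_pos less_imp_le by blast
    show "0 \<le> prod f {p\<in>prime_factors n. y < real p}"
    proof (rule prod_nonneg)
      fix p assume "p \<in> {p\<in>prime_factors n. y < real p}"
      then have "real p \<ge> 2" using prime_ge_2_nat by (auto simp: in_prime_factors_iff)
      then show "0 \<le> f p" by (simp add: f_def)
    qed
  qed
  finally show ?thesis unfolding y_def .
qed

lemma eventually_ratio_totient_le:
  assumes e: "\<epsilon> > 0"
  shows "eventually (\<lambda>n. real n / real (totient n) \<le> (exp euler_mascheroni + \<epsilon>) * ln (ln (real n))) sequentially"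
proof -
  have ln_at_top: "filterlim (\<lambda>n. ln (real n)) at_top sequentially" by real_asymp
  have g: "((\<lambda>y. mertens_product (nat \<lfloor>y\<rfloor>) / ln y * exp (y / ((y - 1) * ln y))) \<longlongrightarrow> exp euler_mascheroni * exp 0) at_top"
  proof (intro tendsto_mult mertens_third_theorem_real tendsto_exp)
    show "((\<lambda>y::real. y / ((y - 1) * ln y)) \<longlongrightarrow> 0) at_top" by real_asymp
  qed
  then have "eventually (\<lambda>y. mertens_product (nat \<lfloor>y\<rfloor>) / ln y * exp (y / ((y - 1) * ln y)) < exp euler_mascheroni + \<epsilon>) at_top"
    using e by (intro order_tendstoD) auto
  then have ev1: "eventually (\<lambda>y. mertens_product (nat \<lfloor>y\<rfloor>) / ln y * exp (y / ((y - 1) * ln y)) < exp euler_mascheroni + \<epsilon> \<and> y \<ge> 3) at_top"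
    using eventually_ge_at_top[of "3::real"] by eventually_elim auto
  have "eventually (\<lambda>n. mertens_product (nat \<lfloor>ln (real n)\<rfloor>) / ln (ln (real n)) * exp (ln (real n) / ((ln (real n) - 1) * ln (ln (real n)))) < exp euler_mascheroni + \<epsilon> \<and> ln (real n) \<ge> 3) sequentially"
    using filterlim_iff[THEN iffD1, OF ln_at_top, rule_format, OF ev1] by simp
  then show ?thesis
  proof eventually_elim
    case (elim n)
    have l: "ln (ln (real n)) > 0" using elim by simp
    have "real n / real (totient n) \<le> mertens_product (nat \<lfloor>ln (real n)\<rfloor>) * exp (ln (real n) / ((ln (real n) - 1) * ln (ln (real n))))"
      using elim by (intro ratio_totient_le_mertens_product) auto
    also have "\<dots> = (mertens_product (nat \<lfloor>ln (real n)\<rfloor>) / ln (ln (real n)) * exp (ln (real n) / ((ln (real n) - 1) * ln (ln (real n))))) * ln (ln (real n))"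
      using l by simp
    also have "\<dots> \<le> (exp euler_mascheroni + \<epsilon>) * ln (ln (real n))"
      using elim l by (intro mult_right_mono) auto
    finally show ?case .
  qed
qed

lemma eventually_sqrt_le_totient: "eventually (\<lambda>n. sqrt (real n) \<le> real (totient n)) sequentially"
proof -
  define C :: real where "C = exp euler_mascheroni + 1"
  have "filterlim (\<lambda>n. sqrt (real n) / ln (ln (real n))) at_top sequentially" by real_asymp
  then have "eventually (\<lambda>n. C \<le> sqrt (real n) / ln (ln (real n))) sequentially"
    by (simp add: filterlim_at_top)
  moreover have "eventually (\<lambda>n. ln (ln (real n)) > 0) sequentially" by real_asymp
  moreover have "eventually (\<lambda>n. real n / real (totient n) \<le> C * ln (ln (real n))) sequentially"
    unfolding C_def by (rule eventually_ratio_totient_le) simp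
  ultimately show ?thesis using eventually_ge_at_top[of 1]
  proof eventually_elim
    case (elim n)
    then have phi: "real (totient n) > 0" by simp
    have "C * ln (ln (real n)) \<le> sqrt (real n)" using elim by (simp add: field_simps)
    with elim(3) have "real n / real (totient n) \<le> sqrt (real n)" by linarith
    then have "real n \<le> real (totient n) * sqrt (real n)"
      using phi by (simp add: divide_le_eq mult.commute)
    then have "real n / sqrt (real n) \<le> real (totient n)"
      using elim(4) by (simp add: divide_le_eq)
    then show ?case by (simp add: real_div_sqrt)
  qed
qed

section \<open>The greatest inverse totient\<close>

lemma eventually_totient_gt: "eventually (\<lambda>n. x < real (totient n)) sequentially"
proof -
  have "filterlim (\<lambda>n. sqrt (real n)) at_top sequentially" by real_asymp
  then have "eventually (\<lambda>n. x < sqrt (real n)) sequentially" by (simp add: filterlim_at_top_dense)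
  with eventually_sqrt_le_totient show ?thesis by eventually_elim linarith
qed

lemma max_totient_preimage:
  assumes "x \<ge> 1"
  shows "max_totient_preimage x > 0" "real (totient (max_totient_preimage x)) \<le> x"
    "\<And>k. k > 0 \<Longrightarrow> real (totient k) \<le> x \<Longrightarrow> k \<le> max_totient_preimage x"
proof -
  obtain M where M: "\<forall>n\<ge>M. real (totient n) > x"
    using eventually_totient_gt[of x] by (auto simp: eventually_sequentially)
  let ?P = "\<lambda>m. m > 0 \<and> real (totient m) \<le> x"
  have P1: "?P 1" using assms by simp
  have bnd: "\<And>y. ?P y \<Longrightarrow> y \<le> M" using M by (meson not_le less_imp_le_nat not_less)
  have "?P (Greatest ?P)" by (rule GreatestI_nat[of ?P 1 M]) (use P1 bnd in auto)
  then show "max_totient_preimage x > 0" "real (totient (max_totient_preimage x)) \<le> x"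
    unfolding max_totient_preimage_def by auto
  fix k assume "k > 0" "real (totient k) \<le> x"
  then have "?P k" by simp
  then show "k \<le> max_totient_preimage x" unfolding max_totient_preimage_def
    by (rule Greatest_le_nat[of ?P k M]) (use bnd in auto)
qed

lemma nat_floor_le_max_totient_preimage:
  assumes "x \<ge> 1"
  shows "nat \<lfloor>x\<rfloor> \<le> max_totient_preimage x"
proof (rule max_totient_preimage(3)[OF assms])
  show "nat \<lfloor>x\<rfloor> > 0" using assms by linarith
  have "real (totient (nat \<lfloor>x\<rfloor>)) \<le> real (nat \<lfloor>x\<rfloor>)" by (simp only: of_nat_le_iff totient_le)
  then show "real (totient (nat \<lfloor>x\<rfloor>)) \<le> x" using assms by linarith
qed

lemma filterlim_max_totient_preimage: "filterlim max_totient_preimage sequentially at_top"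
proof (subst filterlim_at_top, intro allI)
  fix Z :: nat
  have "eventually (\<lambda>x::real. Z \<le> nat \<lfloor>x\<rfloor>) at_top"
    using eventually_ge_at_top[of "real Z"] by eventually_elim (simp add: le_nat_floor)
  then show "eventually (\<lambda>x. Z \<le> max_totient_preimage x) at_top"
    using eventually_ge_at_top[of "1::real"]
    by eventually_elim (use nat_floor_le_max_totient_preimage in \<open>fastforce\<close>)
qed

definition primorial :: "nat \<Rightarrow> nat" where "primorial Y = (\<Prod>p\<in>{p. prime p \<and> p \<le> Y}. p)"

lemma primorial_pos: "primorial Y > 0"
  unfolding primorial_def by (intro prod_pos) (auto dest: prime_gt_0_nat)

lemma primorial_le: "real (primorial Y) \<le> real Y ^ Y"
proof -
  let ?S = "{p. prime p \<and> p \<le> Y}"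
  have "primorial Y \<le> (\<Prod>p\<in>?S. Y)" unfolding primorial_def by (intro prod_mono) auto
  also have "\<dots> = Y ^ card ?S" by simp
  also have "\<dots> \<le> Y ^ Y"
  proof (cases "Y = 0")
    case True
    then have "?S = {}" by (auto dest: prime_gt_0_nat)
    then have c: "card ?S = 0" by simp
    show ?thesis by (simp only: c) (simp add: True)
  next
    case False
    have "?S \<subseteq> {1..Y}" by (auto dest: prime_gt_0_nat)
    then have "card ?S \<le> card {1..Y}" by (intro card_mono) auto
    then have "card ?S \<le> Y" by simp
    then show ?thesis using False by (intro power_increasing) auto
  qed
  finally have "primorial Y \<le> Y ^ Y" .
  then have "real (primorial Y) \<le> real (Y ^ Y)" by (simp only: of_nat_le_iff)
  then show ?thesis by simp
qed

lemma mertens_product_le_ratio_totient_primorial: "real (primorial Y) / real (totient (primorial Y)) \<ge> mertens_product Y"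
proof -
  let ?N = "primorial Y"
  have N0: "?N > 0" by (rule primorial_pos)
  have "mertens_product Y \<le> (\<Prod>p\<in>prime_factors ?N. real p / (real p - 1))" unfolding mertens_product_def
  proof (rule prod_mono2)
    show "finite (prime_factors ?N)" by simp
    show "{p. prime p \<and> p \<le> Y} \<subseteq> prime_factors ?N"
    proof
      fix p assume p: "p \<in> {p. prime p \<and> p \<le> Y}"
      then have "p dvd ?N" unfolding primorial_def by (intro dvd_prodI) auto
      then show "p \<in> prime_factors ?N" using p N0 by (auto simp: in_prime_factors_iff)
    qed
    fix p assume "p \<in> prime_factors ?N - {p. prime p \<and> p \<le> Y}"
    then have "real p \<ge> 2" using prime_ge_2_nat by (auto simp: in_prime_factors_iff)
    then show "1 \<le> real p / (real p - 1)" by simp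
  next
    fix p assume "p \<in> {p. prime p \<and> p \<le> Y}"
    then have "real p \<ge> 2" using prime_ge_2_nat by auto
    then show "0 \<le> real p / (real p - 1)" by simp
  qed
  also have "\<dots> = real ?N / real (totient ?N)" using N0 by (rule real_div_totient_eq_prod[symmetric])
  finally show ?thesis .
qed

lemma totient_mult_le:
  assumes "k > 0" "N > 0"
  shows "real (totient (k * N)) \<le> real k * real (totient N)"
proof -
  let ?g = "\<lambda>p. 1 - 1 / real p"
  have g01: "0 \<le> ?g p \<and> ?g p \<le> 1" if "p \<in> prime_factors (k * N)" for p
  proof -
    have "real p \<ge> 2" using that prime_ge_2_nat by (auto simp: in_prime_factors_iff)
    then show ?thesis by simp
  qed
  have sub: "prime_factors N \<subseteq> prime_factors (k * N)" using assms by (auto simp: in_prime_factors_iff)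
  have "prod ?g (prime_factors (k * N)) = prod ?g (prime_factors (k * N) - prime_factors N) * prod ?g (prime_factors N)"
    using sub by (intro prod.subset_diff) auto
  also have "\<dots> \<le> 1 * prod ?g (prime_factors N)"
  proof (intro mult_right_mono prod_le_1 prod_nonneg)
    fix p assume "p \<in> prime_factors (k * N) - prime_factors N"
    then show "0 \<le> ?g p \<and> ?g p \<le> 1" using g01 by auto
  next
    fix p assume "p \<in> prime_factors N"
    then show "0 \<le> ?g p" using g01 sub by auto
  qed
  finally have le: "prod ?g (prime_factors (k * N)) \<le> prod ?g (prime_factors N)" by simp
  have "real (totient (k * N)) = real k * real N * prod ?g (prime_factors (k * N))"
    by (subst totient_formula2) simp
  also have "\<dots> \<le> real k * real N * prod ?g (prime_factors N)"
    using le by (intro mult_left_mono) auto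
  also have "\<dots> = real k * real (totient N)" using totient_formula2[of N] by simp
  finally show ?thesis .
qed

lemma max_totient_preimage_ge_ratio:
  assumes N: "N > 0" "real N \<le> x"
  shows "x * (real N / real (totient N)) - real N \<le> real (max_totient_preimage x)"
proof -
  have phi0: "real (totient N) > 0" using N by simp
  have phiN: "real (totient N) \<le> real N" by (simp add: totient_le)
  define q where "q = x / real (totient N)"
  have q1: "q \<ge> 1" unfolding q_def using phi0 phiN N by (subst le_divide_eq_1_pos) auto
  define k where "k = nat \<lfloor>q\<rfloor>"
  have k: "real k \<le> q" "real k \<ge> q - 1" "k > 0" unfolding k_def using q1 by linarith+
  have "real (totient (k * N)) \<le> real k * real (totient N)" using k N by (intro totient_mult_le) auto
  also have "\<dots> \<le> q * real (totient N)" using k phi0 by (intro mult_right_mono) auto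
  also have "\<dots> = x" unfolding q_def using phi0 by simp
  finally have "k * N \<le> max_totient_preimage x"
    using k N by (intro max_totient_preimage(3)) auto
  moreover have "x * (real N / real (totient N)) - real N = (q - 1) * real N"
    unfolding q_def using phi0 by (simp add: field_simps)
  moreover have "(q - 1) * real N \<le> real (k * N)" using k by (simp add: mult_right_mono)
  ultimately show ?thesis by (metis of_nat_le_iff order_trans)
qed

lemma max_totient_preimage_ge:
  "eventually (\<lambda>x. real (max_totient_preimage x) \<ge> x * mertens_product (nat \<lfloor>ln x / (2 * ln (ln x))\<rfloor>) - sqrt x) at_top"
proof -
  have "eventually (\<lambda>x::real. x \<ge> 1) at_top" by (rule eventually_ge_at_top)
  moreover have "eventually (\<lambda>x::real. ln (ln x) > 0) at_top" by real_asymp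
  moreover have "eventually (\<lambda>x::real. ln x / (2 * ln (ln x)) \<ge> 2) at_top" by real_asymp
  moreover have "eventually (\<lambda>x::real. ln x / (2 * ln (ln x)) \<le> ln x) at_top" by real_asymp
  ultimately show ?thesis
  proof eventually_elim
    case (elim x)
    define y where "y = ln x / (2 * ln (ln x))"
    define Y where "Y = nat \<lfloor>y\<rfloor>"
    define N where "N = primorial Y"
    have y: "y \<ge> 2" "y \<le> ln x" using elim unfolding y_def by auto
    have x0: "x > 0" "ln x > 0" using elim(1) y by linarith+
    have Y: "real Y \<le> y" "real Y \<ge> 1" unfolding Y_def using y by linarith+
    have N0: "N > 0" unfolding N_def by (rule primorial_pos)
    have "ln (real N) \<le> ln (real Y ^ Y)"
      using N0 Y primorial_le[of Y] unfolding N_def by (subst ln_le_cancel_iff) auto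
    also have "\<dots> = real Y * ln (real Y)" using Y by (simp add: ln_realpow)
    also have "\<dots> \<le> y * ln y" using Y y by (intro mult_mono) auto
    also have "\<dots> \<le> y * ln (ln x)" using y by (intro mult_left_mono) auto
    also have "\<dots> = ln (sqrt x)" unfolding y_def using elim by (simp add: ln_sqrt field_simps)
    finally have Nx: "real N \<le> sqrt x" using N0 x0 by simp
    have "sqrt x \<le> x" using elim real_sqrt_le_mono[of x "x^2"] by (simp add: power2_eq_square)
    then have "x * (real N / real (totient N)) - real N \<le> real (max_totient_preimage x)"
      using N0 Nx by (intro max_totient_preimage_ge_ratio) auto
    moreover have "x * mertens_product Y - sqrt x \<le> x * (real N / real (totient N)) - real N"
      using mertens_product_le_ratio_totient_primorial[of Y] Nx x0 unfolding N_def
      by (intro diff_mono mult_left_mono) auto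
    ultimately show ?case unfolding Y_def y_def by linarith
  qed
qed

lemma max_totient_preimage_lower_bound_tendsto:
  "((\<lambda>x. (x * mertens_product (nat \<lfloor>ln x / (2 * ln (ln x))\<rfloor>) - sqrt x) / (x * ln (ln x))) \<longlongrightarrow> exp euler_mascheroni) at_top"
proof -
  define y where "y x = ln x / (2 * ln (ln x))" for x :: real
  have yt: "filterlim y at_top at_top" unfolding y_def by real_asymp
  have a: "((\<lambda>x. mertens_product (nat \<lfloor>y x\<rfloor>) / ln (y x)) \<longlongrightarrow> exp euler_mascheroni) at_top"
    using filterlim_compose[OF mertens_third_theorem_real yt] by simp
  have b: "((\<lambda>x. ln (y x) / ln (ln x)) \<longlongrightarrow> 1) at_top" unfolding y_def by real_asymp
  have c: "((\<lambda>x::real. sqrt x / (x * ln (ln x))) \<longlongrightarrow> 0) at_top" by real_asymp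
  have "((\<lambda>x. mertens_product (nat \<lfloor>y x\<rfloor>) / ln (y x) * (ln (y x) / ln (ln x)) - sqrt x / (x * ln (ln x))) \<longlongrightarrow> exp euler_mascheroni * 1 - 0) at_top"
    by (intro tendsto_diff tendsto_mult a b c)
  moreover have "eventually (\<lambda>x. mertens_product (nat \<lfloor>y x\<rfloor>) / ln (y x) * (ln (y x) / ln (ln x)) - sqrt x / (x * ln (ln x))
      = (x * mertens_product (nat \<lfloor>ln x / (2 * ln (ln x))\<rfloor>) - sqrt x) / (x * ln (ln x))) at_top"
  proof -
    have e1: "eventually (\<lambda>x::real. ln (ln x) > 0) at_top" by real_asymp
    have e2: "eventually (\<lambda>x::real. ln (y x) > 0) at_top" unfolding y_def by real_asymp
    show ?thesis using e1 e2 eventually_gt_at_top[of "0::real"]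
    proof eventually_elim
      case (elim x)
      then show ?case unfolding y_def by (simp add: field_simps)
    qed
  qed
  ultimately show ?thesis using Lim_transform_eventually by fastforce
qed

lemma max_totient_preimage_le:
  assumes e: "\<epsilon> > 0"
  shows "eventually (\<lambda>x. real (max_totient_preimage x) \<le> (exp euler_mascheroni + \<epsilon>) * x * (ln (ln x) + ln 2)) at_top"
proof -
  define C :: real where "C = exp euler_mascheroni + \<epsilon>"
  have C: "C > 0" unfolding C_def using e by (simp add: add_pos_pos)
  have "eventually (\<lambda>n. ln (ln (real n)) > 0) sequentially" "eventually (\<lambda>n. ln (real n) > 0) sequentially"
    by real_asymp+
  with eventually_ratio_totient_le[OF e] eventually_sqrt_le_totient
  have "eventually (\<lambda>n. real n / real (totient n) \<le> C * ln (ln (real n))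
          \<and> sqrt (real n) \<le> real (totient n) \<and> ln (ln (real n)) > 0 \<and> ln (real n) > 0) sequentially"
    by eventually_elim (simp add: C_def)
  then have "eventually (\<lambda>x. real (max_totient_preimage x) / real (totient (max_totient_preimage x))
          \<le> C * ln (ln (real (max_totient_preimage x)))
        \<and> sqrt (real (max_totient_preimage x)) \<le> real (totient (max_totient_preimage x))
        \<and> ln (ln (real (max_totient_preimage x))) > 0 \<and> ln (real (max_totient_preimage x)) > 0) at_top"
    by (rule eventually_compose_filterlim[OF _ filterlim_max_totient_preimage])
  moreover have "eventually (\<lambda>x::real. x > 1) at_top" by (rule eventually_gt_at_top)
  ultimately show ?thesis unfolding C_def[symmetric]
  proof eventually_elim
    case (elim x)
    define m where "m = max_totient_preimage x"
    have m: "m > 0" "real (totient m) \<le> x" using elim max_totient_preimage[of x] by (auto simp: m_def)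
    have ratio: "real m / real (totient m) \<le> C * ln (ln (real m))"
      and sqrt_le: "sqrt (real m) \<le> real (totient m)" and lnln: "ln (ln (real m)) > 0"
      and ln: "ln (real m) > 0"
      using elim by (simp_all add: m_def)
    have "sqrt (real m) \<le> x" using sqrt_le m by linarith
    then have "real m \<le> x ^ 2" using m by (metis of_nat_0_le_iff real_sqrt_le_iff sqrt_le_D)
    then have "ln (real m) \<le> ln (x ^ 2)" using m elim by (subst ln_le_cancel_iff) auto
    also have "\<dots> = 2 * ln x" using elim by (simp add: ln_realpow)
    finally have "ln (ln (real m)) \<le> ln (2 * ln x)"
      using ln elim by (subst ln_le_cancel_iff) auto
    also have "\<dots> = ln (ln x) + ln 2" using elim by (simp add: ln_mult)
    finally have lnln_le: "ln (ln (real m)) \<le> ln (ln x) + ln 2" .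
    have "real m \<le> C * ln (ln (real m)) * real (totient m)"
      using ratio m by (simp add: pos_divide_le_eq)
    also have "\<dots> \<le> C * (ln (ln x) + ln 2) * x"
      using C lnln lnln_le m by (intro mult_mono mult_left_mono) auto
    finally show ?case by (simp add: m_def algebra_simps)
  qed
qed

lemma max_totient_preimage_ratio_eventually_less:
  assumes "exp euler_mascheroni < a"
  shows "eventually (\<lambda>x. real (max_totient_preimage x) / (x * ln (ln x)) < a) at_top"
proof -
  define \<epsilon> where "\<epsilon> = (a - exp euler_mascheroni) / 2"
  have e: "\<epsilon> > 0" using assms by (simp add: \<epsilon>_def)
  have a: "exp euler_mascheroni + \<epsilon> < a" using assms by (simp add: \<epsilon>_def field_simps)
  have "((\<lambda>x::real. (exp euler_mascheroni + \<epsilon>) * (1 + ln 2 / ln (ln x))) \<longlongrightarrow> (exp euler_mascheroni + \<epsilon>) * (1 + 0)) at_top"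
    by (intro tendsto_intros) real_asymp
  then have "eventually (\<lambda>x. (exp euler_mascheroni + \<epsilon>) * (1 + ln 2 / ln (ln x)) < a) at_top"
    using a by (intro order_tendstoD) auto
  moreover have "eventually (\<lambda>x::real. ln (ln x) > 0) at_top" by real_asymp
  ultimately show ?thesis using max_totient_preimage_le[OF e] eventually_gt_at_top[of 0]
  proof eventually_elim
    case (elim x)
    have "real (max_totient_preimage x) / (x * ln (ln x))
        \<le> (exp euler_mascheroni + \<epsilon>) * x * (ln (ln x) + ln 2) / (x * ln (ln x))"
      using elim by (intro divide_right_mono) auto
    also have "\<dots> = (exp euler_mascheroni + \<epsilon>) * (1 + ln 2 / ln (ln x))"
      using elim by (simp add: field_simps)
    finally show ?case using elim by linarith
  qed
qed

lemma max_totient_preimage_ratio_eventually_greater: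
  assumes "a < exp euler_mascheroni"
  shows "eventually (\<lambda>x. a < real (max_totient_preimage x) / (x * ln (ln x))) at_top"
proof -
  have "eventually (\<lambda>x. a < (x * mertens_product (nat \<lfloor>ln x / (2 * ln (ln x))\<rfloor>) - sqrt x) / (x * ln (ln x))) at_top"
    using max_totient_preimage_lower_bound_tendsto assms by (rule order_tendstoD)
  moreover have "eventually (\<lambda>x::real. x * ln (ln x) > 0) at_top" by real_asymp
  ultimately show ?thesis using max_totient_preimage_ge
  proof eventually_elim
    case (elim x)
    have "(x * mertens_product (nat \<lfloor>ln x / (2 * ln (ln x))\<rfloor>) - sqrt x) / (x * ln (ln x))
        \<le> real (max_totient_preimage x) / (x * ln (ln x))"
      using elim by (intro divide_right_mono) auto
    then show ?case using elim by linarith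
  qed
qed

theorem lemma1:
  shows "((\<lambda>x. real (max_totient_preimage x) / (x * ln (ln x))) \<longlongrightarrow> exp euler_mascheroni) at_top"
  using max_totient_preimage_ratio_eventually_greater max_totient_preimage_ratio_eventually_less
  by (rule order_tendstoI)

end
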